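(* Fix $\theta\in(1/2,1)$, $h_0\in(0,1)$, $h_1\in(0,1]$ and $[\underline\alpha,\bar\alpha]\subset(0,1)$. Assume that for every realization of the disorder and every $\alpha$, $\langle\sigma_i\sigma_j\rangle-\langle\sigma_i\rangle\langle\sigma_j\rangle\ge0$ for all $i,j$. Assume the $J_X$ are independent with finite second moments and $\sum_X\mathrm{Var}(J_X)\le Cn$ for a constant $C$ independent of $n$, and let $C_P>0$ be a constant independent of $n,h_0,h_1,\alpha$ with $\mathbb E[(P_n-p_n)^2]\le C_P/n$ for all parameters. Let $\hat P_n(\alpha)=\mathbb E_{\boldsymbol\tau}P_n$ and $p_n(\alpha)=\mathbb EP_n$. Then for all sufficiently large $n$, $$\int_{\underline\alpha}^{\bar\alpha}d\alpha\,\mathbb E\Big[\Big(\frac{d\hat P_n(\alpha)}{d\alpha}-\frac{dp_n(\alpha)}{d\alpha}\Big)^2\Big]\le\frac{5C_P+40h_1^2}{n^{(5-4\theta)/3}}.$$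
   Context: Spins $\boldsymbol\sigma\in\{-1,1\}^n$, $\sigma_X=\prod_{i\in X}\sigma_i$. The couplings $J_X\ge0$, $X\subset\{1,\dots,n\}$, are independent random variables; $\tau_1,\dots,\tau_n$ are i.i.d. Poisson with mean $\alpha n^{\theta-1}$, independent of the couplings. Hamiltonian $\mathcal H(\boldsymbol\sigma)=-\sum_XJ_X\sigma_X-h_0\sum_i\sigma_i-h_1\sum_i\tau_i\sigma_i$, partition function $\mathcal Z$, Gibbs expectation $\langle\cdot\rangle$. Pressure $P_n=\frac1n\ln\mathcal Z$ (depending on $h_0,h_1,\alpha$ and the disorder). $\mathbb E_{\boldsymbol\tau}$ is expectation over $\boldsymbol\tau$ only and $\mathbb E$ is expectation over all $J_X$ and $\boldsymbol\tau$. *)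

theory Defs
  imports "HOL-Probability.Probability"
begin

definition spins :: "nat \<Rightarrow> (nat \<Rightarrow> real) set" where
  "spins n = PiE {..<n} (\<lambda>_. {-1, 1})"

definition spin_prod :: "(nat \<Rightarrow> real) \<Rightarrow> nat set \<Rightarrow> real" where
  "spin_prod \<sigma> X = (\<Prod>i\<in>X. \<sigma> i)"

definition hamiltonian ::
  "nat \<Rightarrow> real \<Rightarrow> real \<Rightarrow> (nat set \<Rightarrow> real) \<Rightarrow> (nat \<Rightarrow> nat) \<Rightarrow> (nat \<Rightarrow> real) \<Rightarrow> real" where
  "hamiltonian n h0 h1 J \<tau> \<sigma> =
     - (\<Sum>X\<in>Pow {..<n}. J X * spin_prod \<sigma> X)
     - h0 * (\<Sum>i<n. \<sigma> i) - h1 * (\<Sum>i<n. real (\<tau> i) * \<sigma> i)"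

definition partition_fn ::
  "nat \<Rightarrow> real \<Rightarrow> real \<Rightarrow> (nat set \<Rightarrow> real) \<Rightarrow> (nat \<Rightarrow> nat) \<Rightarrow> real" where
  "partition_fn n h0 h1 J \<tau> = (\<Sum>\<sigma>\<in>spins n. exp (- hamiltonian n h0 h1 J \<tau> \<sigma>))"

definition gibbs ::
  "nat \<Rightarrow> real \<Rightarrow> real \<Rightarrow> (nat set \<Rightarrow> real) \<Rightarrow> (nat \<Rightarrow> nat) \<Rightarrow> ((nat \<Rightarrow> real) \<Rightarrow> real) \<Rightarrow> real" where
  "gibbs n h0 h1 J \<tau> f =
     (\<Sum>\<sigma>\<in>spins n. f \<sigma> * exp (- hamiltonian n h0 h1 J \<tau> \<sigma>)) / partition_fn n h0 h1 J \<tau>"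

definition pressure ::
  "nat \<Rightarrow> real \<Rightarrow> real \<Rightarrow> (nat set \<Rightarrow> real) \<Rightarrow> (nat \<Rightarrow> nat) \<Rightarrow> real" where
  "pressure n h0 h1 J \<tau> = ln (partition_fn n h0 h1 J \<tau>) / real n"

definition tau_law :: "nat \<Rightarrow> real \<Rightarrow> real \<Rightarrow> (nat \<Rightarrow> nat) measure" where
  "tau_law n \<theta> \<alpha> = PiM {..<n} (\<lambda>_. measure_pmf (poisson_pmf (\<alpha> * real n powr (\<theta> - 1))))"

definition Phat ::
  "nat \<Rightarrow> real \<Rightarrow> real \<Rightarrow> real \<Rightarrow> (nat set \<Rightarrow> real) \<Rightarrow> real \<Rightarrow> real" where
  "Phat n \<theta> h0 h1 J \<alpha> = (\<integral>\<tau>. pressure n h0 h1 J \<tau> \<partial>tau_law n \<theta> \<alpha>)"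

definition pavg ::
  "(nat set \<Rightarrow> real) measure \<Rightarrow> nat \<Rightarrow> real \<Rightarrow> real \<Rightarrow> real \<Rightarrow> real \<Rightarrow> real" where
  "pavg JM n \<theta> h0 h1 \<alpha> = (\<integral>J. Phat n \<theta> h0 h1 J \<alpha> \<partial>JM)"

end

theory Submission
  imports Defs
begin

text \<open>
  With \<open>c = n powr (\<theta> - 1)\<close>, both \<open>Phat\<close> and \<open>p\<^sub>n\<close> are Poisson expectations at rate \<open>\<alpha> * c\<close>, of the
  pressure and of its average over the couplings. For a Poisson product measure,
  \<open>d/dl E\<^sub>l F = E\<^sub>l (\<Sum>\<^sub>i F (k + e\<^sub>i) - F k)\<close>, so the \<open>\<alpha>\<close>-derivatives are \<open>c\<close> times expectations
  of the forward differences of the pressure. Changing \<open>\<tau>\<^sub>i\<close> by one changes \<open>ln Z\<close> by at most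
  \<open>h1\<close>, which bounds the first derivatives by \<open>c h1\<close>; the nonnegative pair correlations make
  \<open>ln Z\<close> supermodular in \<open>\<tau>\<close>, so second differences are nonnegative and both functions are
  convex in \<open>\<alpha>\<close>. For convex functions, the derivative at \<open>\<alpha>\<close> is squeezed between difference
  quotients over a window of width \<open>d\<close>; this bounds the mean-square difference of derivatives by
  \<open>16 C\<^sub>P / (n d\<^sup>2)\<close> plus a term that integrates over \<open>[a, b]\<close> to at most \<open>16 d (c h1)\<^sup>2\<close>, and the choice
  \<open>d = 2 n powr ((1 - 2\<theta>) / 3)\<close> balances the two.
\<close>

lemma (in prob_space) abs_integral_le_const:
  fixes f :: "'a \<Rightarrow> real"
  assumes f: "integrable M f" and bound: "\<And>x. x \<in> space M \<Longrightarrow> \<bar>f x\<bar> \<le> c"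
  shows "\<bar>\<integral>x. f x \<partial>M\<bar> \<le> c"
proof -
  have "\<bar>\<integral>x. f x \<partial>M\<bar> \<le> (\<integral>x. \<bar>f x\<bar> \<partial>M)"
    using integral_norm_bound[of M f] by simp
  also have "\<dots> \<le> c"
    using f bound by (intro integral_le_const integrable_abs AE_I2) auto
  finally show ?thesis .
qed

lemma (in prob_space) sq_expectation_le_nn_integral:
  assumes X: "integrable M X" and X_sq: "integrable M (\<lambda>x. (X x - p) ^ 2)"
  shows "ennreal ((expectation X - p) ^ 2) \<le> (\<integral>\<^sup>+x. ennreal ((X x - p) ^ 2) \<partial>M)"
proof -
  have Y: "integrable M (\<lambda>x. X x - p)"
    using X by simp
  have "expectation (\<lambda>x. X x - p) = expectation X - p"
    using X by (simp add: prob_space)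
  then have "(expectation X - p) ^ 2 \<le> expectation (\<lambda>x. (X x - p) ^ 2)"
    using variance_eq[OF Y X_sq] variance_positive[of "\<lambda>x. X x - p"] by simp
  then have "ennreal ((expectation X - p) ^ 2) \<le> ennreal (expectation (\<lambda>x. (X x - p) ^ 2))"
    by (rule ennreal_leI)
  also have "ennreal (expectation (\<lambda>x. (X x - p) ^ 2)) = (\<integral>\<^sup>+x. ennreal ((X x - p) ^ 2) \<partial>M)"
    using X_sq by (intro nn_integral_eq_integral[symmetric]) auto
  finally show ?thesis .
qed

section \<open>Derivatives of convex functions that are close in mean square\<close>

lemma diff_quotient_bounds_of_mono_deriv:
  fixes h h' :: "real \<Rightarrow> real"
  assumes d: "0 < d"
    and h: "\<And>x. x \<in> {\<alpha> - d..\<alpha> + d} \<Longrightarrow> (h has_real_derivative h' x) (at x)"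
    and mono: "mono_on {\<alpha> - d..\<alpha> + d} h'"
  shows "d * h' \<alpha> \<le> h (\<alpha> + d) - h \<alpha>" and "h (\<alpha> + d) - h \<alpha> \<le> d * h' (\<alpha> + d)"
    and "d * h' (\<alpha> - d) \<le> h \<alpha> - h (\<alpha> - d)" and "h \<alpha> - h (\<alpha> - d) \<le> d * h' \<alpha>"
proof -
  obtain z where z: "\<alpha> < z" "z < \<alpha> + d" "h (\<alpha> + d) - h \<alpha> = (\<alpha> + d - \<alpha>) * h' z"
    using MVT2[of \<alpha> "\<alpha> + d" h h'] d h by force
  obtain w where w: "\<alpha> - d < w" "w < \<alpha>" "h \<alpha> - h (\<alpha> - d) = (\<alpha> - (\<alpha> - d)) * h' w"
    using MVT2[of "\<alpha> - d" \<alpha> h h'] d h by force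
  have "h' \<alpha> \<le> h' z" "h' z \<le> h' (\<alpha> + d)" "h' (\<alpha> - d) \<le> h' w" "h' w \<le> h' \<alpha>"
    using z(1,2) w(1,2) d by (auto intro!: mono_onD[OF mono])
  then show "d * h' \<alpha> \<le> h (\<alpha> + d) - h \<alpha>" and "h (\<alpha> + d) - h \<alpha> \<le> d * h' (\<alpha> + d)"
    and "d * h' (\<alpha> - d) \<le> h \<alpha> - h (\<alpha> - d)" and "h \<alpha> - h (\<alpha> - d) \<le> d * h' \<alpha>"
    using z(3) w(3) d by (simp_all add: mult_le_cancel_left_pos)
qed

lemma sq_le_of_two_sided_bound:
  fixes x u v p q :: real
  assumes upper: "x \<le> u + p" and lower: "- x \<le> q - v"
  shows "x\<^sup>2 \<le> 2 * u\<^sup>2 + 2 * v\<^sup>2 + 2 * p\<^sup>2 + 2 * q\<^sup>2"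
proof -
  have "x\<^sup>2 \<le> (u + p)\<^sup>2 + (q - v)\<^sup>2"
  proof (cases "0 \<le> x")
    case True
    then show ?thesis
      using power_mono[OF upper, of 2] by (simp add: add_increasing2)
  next
    case False
    then show ?thesis
      using power_mono[OF lower, of 2] by (simp add: add_increasing)
  qed
  also have "\<dots> = 2 * u\<^sup>2 + 2 * v\<^sup>2 + 2 * p\<^sup>2 + 2 * q\<^sup>2 - ((u - p)\<^sup>2 + (q + v)\<^sup>2)"
    by (simp add: power2_eq_square algebra_simps)
  finally show ?thesis
    using zero_le_power2[of "u - p"] zero_le_power2[of "q + v"] by linarith
qed

lemma deriv_diff_sq_le:
  fixes f g f' g' :: "real \<Rightarrow> real"
  assumes d: "0 < d"
    and f: "\<And>x. x \<in> {\<alpha> - d..\<alpha> + d} \<Longrightarrow> (f has_real_derivative f' x) (at x)"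
    and g: "\<And>x. x \<in> {\<alpha> - d..\<alpha> + d} \<Longrightarrow> (g has_real_derivative g' x) (at x)"
    and f'_mono: "mono_on {\<alpha> - d..\<alpha> + d} f'" and g'_mono: "mono_on {\<alpha> - d..\<alpha> + d} g'"
    and g'_bound: "\<And>x. x \<in> {\<alpha> - d..\<alpha> + d} \<Longrightarrow> \<bar>g' x\<bar> \<le> L"
  shows "(f' \<alpha> - g' \<alpha>)\<^sup>2 \<le> 4 * ((f (\<alpha> + d) - g (\<alpha> + d))\<^sup>2 + 2 * (f \<alpha> - g \<alpha>)\<^sup>2 + (f (\<alpha> - d) - g (\<alpha> - d))\<^sup>2) / d\<^sup>2
          + 4 * L * (g' (\<alpha> + d) - g' (\<alpha> - d))"
proof -
  define ep e0 em where "ep = f (\<alpha> + d) - g (\<alpha> + d)" and "e0 = f \<alpha> - g \<alpha>"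
    and "em = f (\<alpha> - d) - g (\<alpha> - d)"
  define p q where "p = g' (\<alpha> + d) - g' \<alpha>" and "q = g' \<alpha> - g' (\<alpha> - d)"
  have "d * (f' \<alpha> - g' \<alpha>) \<le> (ep - e0) + d * p" and "d * (- (f' \<alpha> - g' \<alpha>)) \<le> d * q - (e0 - em)"
    using diff_quotient_bounds_of_mono_deriv[OF d f f'_mono] diff_quotient_bounds_of_mono_deriv[OF d g g'_mono]
    by (simp_all add: ep_def e0_def em_def p_def q_def algebra_simps)
  then have "f' \<alpha> - g' \<alpha> \<le> (ep - e0) / d + p" and "- (f' \<alpha> - g' \<alpha>) \<le> q - (e0 - em) / d"
    using d by (simp_all add: field_simps)
  then have "(f' \<alpha> - g' \<alpha>)\<^sup>2 \<le> 2 * ((ep - e0) / d)\<^sup>2 + 2 * ((e0 - em) / d)\<^sup>2 + 2 * p\<^sup>2 + 2 * q\<^sup>2"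
    by (rule sq_le_of_two_sided_bound)
  moreover have "2 * ((ep - e0) / d)\<^sup>2 + 2 * ((e0 - em) / d)\<^sup>2 \<le> 4 * (ep\<^sup>2 + 2 * e0\<^sup>2 + em\<^sup>2) / d\<^sup>2"
  proof -
    have "2 * (ep - e0)\<^sup>2 + 2 * (e0 - em)\<^sup>2 = 4 * (ep\<^sup>2 + 2 * e0\<^sup>2 + em\<^sup>2) - 2 * (ep + e0)\<^sup>2 - 2 * (e0 + em)\<^sup>2"
      by (simp add: power2_eq_square algebra_simps)
    also have "\<dots> \<le> 4 * (ep\<^sup>2 + 2 * e0\<^sup>2 + em\<^sup>2)"
      using zero_le_power2[of "ep + e0"] zero_le_power2[of "e0 + em"] by linarith
    finally show ?thesis
      by (simp add: power_divide add_divide_distrib[symmetric] divide_right_mono)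
  qed
  moreover have "2 * p\<^sup>2 + 2 * q\<^sup>2 \<le> 4 * L * (g' (\<alpha> + d) - g' (\<alpha> - d))"
  proof -
    have "g' (\<alpha> - d) \<le> g' \<alpha>" and "g' \<alpha> \<le> g' (\<alpha> + d)"
      using mono_onD[OF g'_mono] d by simp_all
    moreover have "\<bar>g' (\<alpha> + d)\<bar> \<le> L" and "\<bar>g' \<alpha>\<bar> \<le> L" and "\<bar>g' (\<alpha> - d)\<bar> \<le> L"
      using g'_bound d by simp_all
    ultimately have "0 \<le> p" "p \<le> 2 * L" "0 \<le> q" "q \<le> 2 * L"
      by (simp_all add: p_def q_def abs_le_iff)
    then have "p\<^sup>2 \<le> 2 * L * p" and "q\<^sup>2 \<le> 2 * L * q"
      by (simp_all add: power2_eq_square mult_right_mono)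
    then show ?thesis
      by (simp add: p_def q_def algebra_simps)
  qed
  ultimately show ?thesis
    unfolding ep_def e0_def em_def by linarith
qed

lemma abs_diff_le_of_deriv_bound:
  fixes F f :: "real \<Rightarrow> real"
  assumes d: "0 < d"
    and F: "\<And>x. x \<in> {t - d..t + d} \<Longrightarrow> (F has_real_derivative f x) (at x)"
    and bound: "\<And>x. x \<in> {t - d..t + d} \<Longrightarrow> \<bar>f x\<bar> \<le> L"
  shows "\<bar>F (t + d) - F (t - d)\<bar> \<le> 2 * d * L"
proof -
  obtain z where z: "t - d < z" "z < t + d" "F (t + d) - F (t - d) = (t + d - (t - d)) * f z"
    using MVT2[of "t - d" "t + d" F f] d F by force
  then show ?thesis
    using bound[of z] d by (simp add: abs_mult mult_left_mono)
qed

lemma has_integral_shifted_deriv: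
  fixes F f :: "real \<Rightarrow> real"
  assumes ab: "a \<le> b" and F: "\<And>x. x \<in> {a..b} \<Longrightarrow> (F has_real_derivative f (x + c)) (at (x + c))"
  shows "((\<lambda>x. f (x + c)) has_integral (F (b + c) - F (a + c))) {a..b}"
proof -
  have "((\<lambda>x. F (x + c)) has_vector_derivative f (x + c)) (at x within {a..b})" if "x \<in> {a..b}" for x
  proof -
    have "((\<lambda>x. x + c) has_real_derivative 1) (at x)"
      by (auto intro!: derivative_eq_intros)
    from DERIV_chain2[OF F[OF that] this]
    have "((\<lambda>x. F (x + c)) has_real_derivative f (x + c) * 1) (at x)" .
    then show ?thesis
      by (simp add: has_real_derivative_iff_has_vector_derivative has_vector_derivative_at_within)
  qed
  then show ?thesis
    using fundamental_theorem_of_calculus[OF ab, of "\<lambda>x. F (x + c)" "\<lambda>x. f (x + c)"] by simp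
qed

lemma has_integral_deriv_window:
  fixes G G' :: "real \<Rightarrow> real"
  assumes d: "0 < d" and ab: "a \<le> b"
    and G: "\<And>x. x \<in> {a - d..b + d} \<Longrightarrow> (G has_real_derivative G' x) (at x)"
    and G'_bound: "\<And>x. x \<in> {a - d..b + d} \<Longrightarrow> \<bar>G' x\<bar> \<le> L"
  obtains I where "((\<lambda>x. G' (x + d) - G' (x - d)) has_integral I) {a..b}" and "I \<le> 4 * d * L"
proof
  have "((\<lambda>x. G' (x + d) - G' (x + - d)) has_integral
      (G (b + d) - G (a + d)) - (G (b + - d) - G (a + - d))) {a..b}"
    using d by (intro has_integral_diff has_integral_shifted_deriv ab G) auto
  then show "((\<lambda>x. G' (x + d) - G' (x - d)) has_integral
      (G (b + d) - G (b - d)) - (G (a + d) - G (a - d))) {a..b}"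
    by (simp add: algebra_simps)
  have "\<bar>G (t + d) - G (t - d)\<bar> \<le> 2 * d * L" if "t \<in> {a, b}" for t
    by (rule abs_diff_le_of_deriv_bound[OF d, of t G G']) (use that ab in \<open>auto intro!: G G'_bound\<close>)
  from this[of a] this[of b] show "(G (b + d) - G (b - d)) - (G (a + d) - G (a - d)) \<le> 4 * d * L"
    by (simp add: abs_le_iff)
qed

context prob_space
begin

lemma nn_integral_deriv_diff_sq_le:
  fixes F F' :: "'a \<Rightarrow> real \<Rightarrow> real" and G G' :: "real \<Rightarrow> real"
  assumes d: "0 < d" and \<epsilon>: "0 \<le> \<epsilon>"
    and F: "\<And>J x. x \<in> {\<alpha> - d..\<alpha> + d} \<Longrightarrow> (F J has_real_derivative F' J x) (at x)"
    and G: "\<And>x. x \<in> {\<alpha> - d..\<alpha> + d} \<Longrightarrow> (G has_real_derivative G' x) (at x)"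
    and F'_mono: "AE J in M. mono_on {\<alpha> - d..\<alpha> + d} (F' J)"
    and G'_mono: "mono_on {\<alpha> - d..\<alpha> + d} G'"
    and G'_bound: "\<And>x. x \<in> {\<alpha> - d..\<alpha> + d} \<Longrightarrow> \<bar>G' x\<bar> \<le> L"
    and F_measurable: "\<And>x. (\<lambda>J. F J x) \<in> borel_measurable M"
    and close: "\<And>x. x \<in> {\<alpha> - d..\<alpha> + d} \<Longrightarrow> (\<integral>\<^sup>+J. ennreal ((F J x - G x)\<^sup>2) \<partial>M) \<le> ennreal \<epsilon>"
  shows "(\<integral>\<^sup>+J. ennreal ((deriv (F J) \<alpha> - deriv G \<alpha>)\<^sup>2) \<partial>M)
       \<le> ennreal (16 * \<epsilon> / d\<^sup>2 + 4 * L * (G' (\<alpha> + d) - G' (\<alpha> - d)))"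
proof -
  define K where "K = 4 * L * (G' (\<alpha> + d) - G' (\<alpha> - d))"
  define e where "e J x = (F J x - G x)\<^sup>2" for J x
  have in_window: "\<alpha> \<in> {\<alpha> - d..\<alpha> + d}" "\<alpha> + d \<in> {\<alpha> - d..\<alpha> + d}" "\<alpha> - d \<in> {\<alpha> - d..\<alpha> + d}"
    using d by auto
  have K_nonneg: "0 \<le> K"
    using G'_bound[of \<alpha>] mono_onD[OF G'_mono, of "\<alpha> - d" "\<alpha> + d"] in_window
    by (simp add: K_def)
  have "AE J in M. (deriv (F J) \<alpha> - deriv G \<alpha>)\<^sup>2
      \<le> 4 / d\<^sup>2 * e J (\<alpha> + d) + 8 / d\<^sup>2 * e J \<alpha> + 4 / d\<^sup>2 * e J (\<alpha> - d) + K"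
    using F'_mono
  proof eventually_elim
    case (elim J)
    have "deriv (F J) \<alpha> = F' J \<alpha>" and "deriv G \<alpha> = G' \<alpha>"
      using F G in_window by (auto intro: DERIV_imp_deriv)
    then show ?case
      using deriv_diff_sq_le[OF d F G elim G'_mono G'_bound]
      by (simp add: e_def K_def add_divide_distrib algebra_simps)
  qed
  then have "(\<integral>\<^sup>+J. ennreal ((deriv (F J) \<alpha> - deriv G \<alpha>)\<^sup>2) \<partial>M)
      \<le> (\<integral>\<^sup>+J. ennreal (4 / d\<^sup>2) * e J (\<alpha> + d) + ennreal (8 / d\<^sup>2) * e J \<alpha>
                + ennreal (4 / d\<^sup>2) * e J (\<alpha> - d) + ennreal K \<partial>M)"
    by (intro nn_integral_mono_AE, elim AE_mp, intro AE_I2 impI)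
      (simp add: e_def K_nonneg ennreal_mult[symmetric] ennreal_plus[symmetric] del: ennreal_plus)
  also have "\<dots> = ennreal (4 / d\<^sup>2) * (\<integral>\<^sup>+J. e J (\<alpha> + d) \<partial>M) + ennreal (8 / d\<^sup>2) * (\<integral>\<^sup>+J. e J \<alpha> \<partial>M)
      + ennreal (4 / d\<^sup>2) * (\<integral>\<^sup>+J. e J (\<alpha> - d) \<partial>M) + ennreal K"
    using F_measurable by (simp add: e_def nn_integral_add nn_integral_cmult emeasure_space_1)
  also have "\<dots> \<le> ennreal (4 / d\<^sup>2) * ennreal \<epsilon> + ennreal (8 / d\<^sup>2) * ennreal \<epsilon>
      + ennreal (4 / d\<^sup>2) * ennreal \<epsilon> + ennreal K"
    unfolding e_def using in_window by (intro add_mono mult_left_mono close order.refl) auto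
  also have "\<dots> = ennreal (16 * \<epsilon> / d\<^sup>2 + K)"
    using \<epsilon> K_nonneg by (simp add: ennreal_plus[symmetric] ennreal_mult[symmetric] field_simps del: ennreal_plus)
  finally show ?thesis
    unfolding K_def .
qed

text \<open>The pointwise error term \<open>G' (\<alpha> + d) - G' (\<alpha> - d)\<close> integrates to a difference of values
  of \<open>G\<close>, which is \<open>O(d L)\<close>.\<close>
lemma set_nn_integral_deriv_diff_sq_le:
  fixes F F' :: "'a \<Rightarrow> real \<Rightarrow> real" and G G' :: "real \<Rightarrow> real"
  assumes d: "0 < d" and ab: "a \<le> b" and \<epsilon>: "0 \<le> \<epsilon>"
    and F: "\<And>J x. x \<in> {a - d..b + d} \<Longrightarrow> (F J has_real_derivative F' J x) (at x)"
    and G: "\<And>x. x \<in> {a - d..b + d} \<Longrightarrow> (G has_real_derivative G' x) (at x)"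
    and F'_mono: "AE J in M. mono_on {a - d..b + d} (F' J)"
    and G'_mono: "mono_on {a - d..b + d} G'"
    and G'_bound: "\<And>x. x \<in> {a - d..b + d} \<Longrightarrow> \<bar>G' x\<bar> \<le> L"
    and F_measurable: "\<And>x. (\<lambda>J. F J x) \<in> borel_measurable M"
    and close: "\<And>x. x \<in> {a - d..b + d} \<Longrightarrow> (\<integral>\<^sup>+J. ennreal ((F J x - G x)\<^sup>2) \<partial>M) \<le> ennreal \<epsilon>"
  shows "(\<integral>\<^sup>+\<alpha>\<in>{a..b}. (\<integral>\<^sup>+J. ennreal ((deriv (F J) \<alpha> - deriv G \<alpha>)\<^sup>2) \<partial>M) \<partial>lborel)
       \<le> ennreal (16 * \<epsilon> * (b - a) / d\<^sup>2 + 16 * d * L\<^sup>2)"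
proof -
  define h where "h x = 16 * \<epsilon> / d\<^sup>2 + 4 * L * (G' (x + d) - G' (x - d))" for x
  obtain I where I: "((\<lambda>x. G' (x + d) - G' (x - d)) has_integral I) {a..b}" and I_le: "I \<le> 4 * d * L"
    using has_integral_deriv_window[OF d ab G G'_bound] by blast
  have L: "0 \<le> L"
    using G'_bound[of a] d ab by auto
  have window: "{\<alpha> - d..\<alpha> + d} \<subseteq> {a - d..b + d}" if "\<alpha> \<in> {a..b}" for \<alpha>
    using that by auto
  have h_nonneg: "0 \<le> h x" if "x \<in> {a..b}" for x
    using mono_onD[OF G'_mono, of "x - d" "x + d"] that d L \<epsilon> by (simp add: h_def)
  have inner: "(\<integral>\<^sup>+J. ennreal ((deriv (F J) \<alpha> - deriv G \<alpha>)\<^sup>2) \<partial>M) * indicator {a..b} \<alpha>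
      \<le> ennreal (h \<alpha>) * indicator {a..b} \<alpha>" for \<alpha>
  proof (cases "\<alpha> \<in> {a..b}")
    case True
    have "AE J in M. mono_on {\<alpha> - d..\<alpha> + d} (F' J)"
      using F'_mono by eventually_elim (rule mono_on_subset[OF _ window[OF True]])
    then have "(\<integral>\<^sup>+J. ennreal ((deriv (F J) \<alpha> - deriv G \<alpha>)\<^sup>2) \<partial>M) \<le> ennreal (h \<alpha>)"
      unfolding h_def using window[OF True]
      by (intro nn_integral_deriv_diff_sq_le[OF d \<epsilon>] F G G'_bound F_measurable close
          mono_on_subset[OF G'_mono]) (auto intro!: F)
    then show ?thesis
      using True by simp
  qed simp
  have h_integral: "(h has_integral 16 * \<epsilon> / d\<^sup>2 * (b - a) + 4 * L * I) {a..b}"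
    unfolding h_def[abs_def]
    using has_integral_const_real[of "16 * \<epsilon> / d\<^sup>2" a b] ab
    by (intro has_integral_add has_integral_mult_right I) (simp add: mult.commute)
  have "(\<integral>\<^sup>+\<alpha>\<in>{a..b}. (\<integral>\<^sup>+J. ennreal ((deriv (F J) \<alpha> - deriv G \<alpha>)\<^sup>2) \<partial>M) \<partial>lborel)
      \<le> (\<integral>\<^sup>+\<alpha>. ennreal (h \<alpha>) * indicator {a..b} \<alpha> \<partial>lborel)"
    by (intro nn_integral_mono inner)
  also have "\<dots> = ennreal (16 * \<epsilon> / d\<^sup>2 * (b - a) + 4 * L * I)"
    by (rule nn_integral_has_integral_lebesgue'[OF h_nonneg h_integral])
  also have "\<dots> \<le> ennreal (16 * \<epsilon> * (b - a) / d\<^sup>2 + 16 * d * L\<^sup>2)"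
    using mult_left_mono[OF I_le, of "4 * L"] L by (intro ennreal_leI) (simp add: power2_eq_square)
  finally show ?thesis .
qed

end

section \<open>Expectations under products of Poisson laws\<close>

definition poisson_prod :: "nat \<Rightarrow> real \<Rightarrow> (nat \<Rightarrow> nat) measure" where
  "poisson_prod n l = PiM {..<n} (\<lambda>_. measure_pmf (poisson_pmf l))"

definition poisson_expect :: "nat \<Rightarrow> ((nat \<Rightarrow> nat) \<Rightarrow> real) \<Rightarrow> real \<Rightarrow> real" where
  "poisson_expect n F l = (\<integral>k. F k \<partial>poisson_prod n l)"

definition mass_level :: "nat \<Rightarrow> nat \<Rightarrow> (nat \<Rightarrow> nat) set" where
  "mass_level n m = {k \<in> PiE {..<n} (\<lambda>_. UNIV). (\<Sum>i<n. k i) = m}"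

definition fact_prod :: "nat \<Rightarrow> (nat \<Rightarrow> nat) \<Rightarrow> real" where
  "fact_prod n k = (\<Prod>i<n. fact (k i))"

text \<open>The coefficients of the power series \<open>exp (n * l) * poisson_expect n F l\<close> in \<open>l\<close>.\<close>
definition poisson_coeff :: "nat \<Rightarrow> ((nat \<Rightarrow> nat) \<Rightarrow> real) \<Rightarrow> nat \<Rightarrow> real" where
  "poisson_coeff n F m = (\<Sum>k\<in>mass_level n m. F k / fact_prod n k)"

definition incr :: "nat \<Rightarrow> (nat \<Rightarrow> nat) \<Rightarrow> nat \<Rightarrow> nat" where
  "incr i k = k(i := Suc (k i))"

definition fwd_diff :: "nat \<Rightarrow> ((nat \<Rightarrow> nat) \<Rightarrow> real) \<Rightarrow> (nat \<Rightarrow> nat) \<Rightarrow> real" where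
  "fwd_diff n F k = (\<Sum>i<n. F (incr i k) - F k)"

text \<open>Base \<open>4\<close> leaves room for squares of functions of order \<open>2 ^ (\<Sum>i<n. k i)\<close>, such as the
  pressure.\<close>
definition exp_growth :: "nat \<Rightarrow> ((nat \<Rightarrow> nat) \<Rightarrow> real) \<Rightarrow> bool" where
  "exp_growth n F \<longleftrightarrow> (\<exists>M. \<forall>k\<in>PiE {..<n} (\<lambda>_. UNIV). \<bar>F k\<bar> \<le> M * 4 ^ (\<Sum>i<n. k i))"

lemma space_poisson_prod: "space (poisson_prod n l) = PiE {..<n} (\<lambda>_. UNIV)"
  by (simp add: poisson_prod_def space_PiM)

lemma prob_space_poisson_prod: "prob_space (poisson_prod n l)"
  unfolding poisson_prod_def by (intro prob_space_PiM measure_pmf.prob_space_axioms)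

lemma finite_mass_level: "finite (mass_level n m)"
proof (rule finite_subset)
  have "k i \<le> m" if "k \<in> mass_level n m" "i < n" for k i
    using that member_le_sum[of i "{..<n}" k] by (auto simp: mass_level_def)
  then show "mass_level n m \<subseteq> PiE {..<n} (\<lambda>_. {..m})"
    by (auto simp: mass_level_def PiE_def Pi_def)
qed (auto intro: finite_PiE)

lemma singleton_eq_PiE:
  assumes "k \<in> PiE I (\<lambda>_. UNIV)" shows "{k} = PiE I (\<lambda>i. {k i})"
proof (intro set_eqI iffI)
  fix x assume x: "x \<in> PiE I (\<lambda>i. {k i})"
  then have "x \<in> PiE I (\<lambda>_. UNIV)" by (auto simp: PiE_def)
  with x show "x \<in> {k}" by (auto intro: PiE_ext[OF _ assms])
qed (use assms in auto)

lemma singleton_sets_poisson_prod: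
  assumes "k \<in> space (poisson_prod n l)" shows "{k} \<in> sets (poisson_prod n l)"
proof -
  have "{k} = PiE {..<n} (\<lambda>i. {k i})"
    using assms by (simp add: space_poisson_prod singleton_eq_PiE)
  then show ?thesis unfolding poisson_prod_def by (simp add: sets_PiM_I_finite)
qed

lemma sets_poisson_prod: "A \<subseteq> space (poisson_prod n l) \<Longrightarrow> A \<in> sets (poisson_prod n l)"
proof (rule sets.countable)
  assume A: "A \<subseteq> space (poisson_prod n l)"
  then show "countable A"
    by (rule countable_subset) (simp add: space_poisson_prod countable_PiE)
  show "{k} \<in> sets (poisson_prod n l)" if "k \<in> A" for k
    using A that by (auto intro: singleton_sets_poisson_prod)
qed

lemma measurable_poisson_prod [measurable]:
  "f \<in> measurable (poisson_prod n l) (borel :: 'a::topological_space measure)"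
  by (auto intro!: measurableI sets_poisson_prod)

lemma emeasure_poisson_prod_singleton:
  assumes "0 < l" and "k \<in> mass_level n m"
  shows "emeasure (poisson_prod n l) {k} = ennreal (exp (- (n * l)) * l ^ m / fact_prod n k)"
proof -
  interpret product_sigma_finite "\<lambda>_. measure_pmf (poisson_pmf l)"
    by unfold_locales
  have k: "k \<in> PiE {..<n} (\<lambda>_. UNIV)" and m: "(\<Sum>i<n. k i) = m"
    using assms(2) by (auto simp: mass_level_def)
  have "emeasure (poisson_prod n l) {k} = (\<Prod>i<n. ennreal (l ^ k i / fact (k i) * exp (- l)))"
    using assms(1) k by (simp add: poisson_prod_def singleton_eq_PiE emeasure_PiM emeasure_pmf_single)
  also have "\<dots> = ennreal (\<Prod>i<n. l ^ k i / fact (k i) * exp (- l))"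
    using assms(1) by (subst prod_ennreal) auto
  also have "(\<Prod>i<n. l ^ k i / fact (k i) * exp (- l)) = exp (- (n * l)) * l ^ m / fact_prod n k"
    using m by (simp add: fact_prod_def prod.distrib prod_dividef power_sum[symmetric]
        exp_of_nat_mult[symmetric])
  finally show ?thesis .
qed

lemma mass_level_iff: "k \<in> mass_level n m \<longleftrightarrow> k \<in> space (poisson_prod n l) \<and> (\<Sum>i<n. k i) = m"
  by (simp add: mass_level_def space_poisson_prod)

lemma nn_integral_poisson_prod:
  assumes l: "0 < l"
  shows "(\<integral>\<^sup>+k. G k \<partial>poisson_prod n l)
       = (\<Sum>m. \<Sum>k\<in>mass_level n m. ennreal (exp (- (n * l)) * l ^ m / fact_prod n k) * G k)"
proof -
  have G_eq: "G k = (\<Sum>m. \<Sum>j\<in>mass_level n m. G j * indicator {j} k)"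
    if k: "k \<in> space (poisson_prod n l)" for k
  proof -
    have "(\<Sum>j\<in>mass_level n m. G j * indicator {j} k) = (if m = (\<Sum>i<n. k i) then G k else 0)" for m
      using k by (auto simp: indicator_def finite_mass_level mass_level_iff[of _ _ _ l] if_distrib
          cong: if_cong)
    moreover have "(\<lambda>m. if m = (\<Sum>i<n. k i) then G k else 0) sums G k"
      using sums_single[of "\<Sum>i<n. k i" "\<lambda>_. G k"] by simp
    ultimately show ?thesis by (simp add: sums_iff)
  qed
  have "(\<integral>\<^sup>+k. G k \<partial>poisson_prod n l)
      = (\<integral>\<^sup>+k. (\<Sum>m. \<Sum>j\<in>mass_level n m. G j * indicator {j} k) \<partial>poisson_prod n l)"
    by (rule nn_integral_cong) (use G_eq in auto)
  also have "\<dots> = (\<Sum>m. \<Sum>j\<in>mass_level n m. \<integral>\<^sup>+k. G j * indicator {j} k \<partial>poisson_prod n l)"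
    by (simp add: nn_integral_suminf nn_integral_sum)
  also have "\<dots> = (\<Sum>m. \<Sum>k\<in>mass_level n m. ennreal (exp (- (n * l)) * l ^ m / fact_prod n k) * G k)"
    using l by (intro suminf_cong sum.cong refl)
      (simp add: nn_integral_cmult_indicator singleton_sets_poisson_prod mass_level_iff[of _ _ _ l]
        emeasure_poisson_prod_singleton mult.commute)
  finally show ?thesis .
qed

lemma nn_integral_poisson_prod_four_pow_finite:
  assumes l: "0 < l"
  shows "(\<integral>\<^sup>+k. ennreal (4 ^ (\<Sum>i<n. k i)) \<partial>poisson_prod n l) \<noteq> \<top>"
proof -
  interpret product_sigma_finite "\<lambda>_. measure_pmf (poisson_pmf l)"
    by unfold_locales
  have "(\<integral>\<^sup>+y. ennreal (4 ^ y) \<partial>measure_pmf (poisson_pmf l))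
      = (\<Sum>y. ennreal (exp (- l) * (inverse (fact y) * (4 * l) ^ y)))"
    using l by (simp add: nn_integral_measure_pmf nn_integral_count_space_nat power_mult_distrib
        divide_inverse ennreal_mult'[symmetric] mult_ac)
  also have "\<dots> \<noteq> \<top>"
    using l by (intro ennreal_suminf_neq_top summable_mult summable_exp) auto
  finally have single: "(\<integral>\<^sup>+y. ennreal (4 ^ y) \<partial>measure_pmf (poisson_pmf l)) \<noteq> \<top>" .
  have "(\<integral>\<^sup>+k. ennreal (4 ^ (\<Sum>i<n. k i)) \<partial>poisson_prod n l)
      = (\<integral>\<^sup>+k. (\<Prod>i<n. ennreal (4 ^ k i)) \<partial>poisson_prod n l)"
    by (simp add: power_sum prod_ennreal)
  also have "\<dots> = (\<Prod>i<n. \<integral>\<^sup>+y. ennreal (4 ^ y) \<partial>measure_pmf (poisson_pmf l))"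
    unfolding poisson_prod_def by (rule product_nn_integral_prod) auto
  also have "\<dots> \<noteq> \<top>"
    using single by (simp add: power_eq_top_ennreal)
  finally show ?thesis .
qed

lemma integrable_poisson_prod:
  assumes l: "0 < l" and F: "exp_growth n F"
  shows "integrable (poisson_prod n l) F"
proof -
  obtain M where M: "\<And>k. k \<in> space (poisson_prod n l) \<Longrightarrow> \<bar>F k\<bar> \<le> M * 4 ^ (\<Sum>i<n. k i)"
    using F by (auto simp: exp_growth_def space_poisson_prod)
  have "(\<integral>\<^sup>+k. ennreal (norm (F k)) \<partial>poisson_prod n l)
      \<le> (\<integral>\<^sup>+k. ennreal \<bar>M\<bar> * ennreal (4 ^ (\<Sum>i<n. k i)) \<partial>poisson_prod n l)"
    using M by (intro nn_integral_mono) (force simp flip: ennreal_mult intro: order.trans abs_ge_self)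
  also have "\<dots> = ennreal \<bar>M\<bar> * (\<integral>\<^sup>+k. ennreal (4 ^ (\<Sum>i<n. k i)) \<partial>poisson_prod n l)"
    by (simp add: nn_integral_cmult)
  also have "\<dots> < \<top>"
    using nn_integral_poisson_prod_four_pow_finite[OF l]
    by (simp add: ennreal_mult_less_top top.not_eq_extremum)
  finally show ?thesis
    by (intro integrableI_bounded) auto
qed

lemma exp_growth_bounded:
  assumes bound: "\<And>k. \<bar>F k\<bar> \<le> c"
  shows "exp_growth n F"
  unfolding exp_growth_def
proof (intro exI ballI)
  fix k :: "nat \<Rightarrow> nat"
  have "c \<le> c * 4 ^ (\<Sum>i<n. k i)"
    using bound[of k] by (simp add: mult_le_cancel_left1)
  then show "\<bar>F k\<bar> \<le> c * 4 ^ (\<Sum>i<n. k i)"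
    using bound[of k] by linarith
qed

lemma exp_growth_mono:
  assumes "exp_growth n F" and "\<And>k. \<bar>G k\<bar> \<le> \<bar>F k\<bar>"
  shows "exp_growth n G"
  using assms unfolding exp_growth_def by (meson order.trans)

lemma exp_growth_two_pow:
  assumes "\<And>k. \<bar>F k\<bar> \<le> c * 2 ^ (\<Sum>i<n. k i)"
  shows "exp_growth n F"
  unfolding exp_growth_def
proof (intro exI ballI)
  fix k :: "nat \<Rightarrow> nat"
  have "0 \<le> c * 2 ^ (\<Sum>i<n. k i)"
    using assms[of k] abs_ge_zero order.trans by blast
  then have "0 \<le> c"
    by (metis not_le mult_neg_pos zero_less_power zero_less_numeral)
  then show "\<bar>F k\<bar> \<le> c * 4 ^ (\<Sum>i<n. k i)"
    using assms[of k] mult_left_mono[OF power_mono[of 2 4 "\<Sum>i<n. k i"], of c] by simp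
qed

lemma exp_growth_two_pow_sq:
  assumes "\<And>k. \<bar>F k\<bar> \<le> c * 2 ^ (\<Sum>i<n. k i)"
  shows "exp_growth n (\<lambda>k. (F k - p) ^ 2)"
  unfolding exp_growth_def
proof (intro exI ballI)
  fix k :: "nat \<Rightarrow> nat"
  define t where "t = (2::real) ^ (\<Sum>i<n. k i)"
  have "1 \<le> t"
    by (simp add: t_def)
  then have "\<bar>F k - p\<bar> \<le> (c + \<bar>p\<bar>) * t"
    using assms[of k] mult_left_mono[of 1 t "\<bar>p\<bar>"] unfolding t_def[symmetric]
    by (simp add: algebra_simps)
  then have "\<bar>F k - p\<bar> ^ 2 \<le> ((c + \<bar>p\<bar>) * t) ^ 2"
    by (intro power_mono) auto
  also have "\<dots> = (c + \<bar>p\<bar>) ^ 2 * 4 ^ (\<Sum>i<n. k i)"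
  proof -
    have "t ^ 2 = 4 ^ (\<Sum>i<n. k i)"
      unfolding t_def power2_eq_square power_mult_distrib[symmetric] by simp
    then show ?thesis
      by (simp add: power_mult_distrib)
  qed
  finally show "\<bar>(F k - p) ^ 2\<bar> \<le> (c + \<bar>p\<bar>) ^ 2 * 4 ^ (\<Sum>i<n. k i)"
    by simp
qed

lemma fact_prod_pos: "0 < fact_prod n k"
  unfolding fact_prod_def by (intro prod_pos) auto

lemma poisson_coeff_nonneg: "(\<And>k. 0 \<le> F k) \<Longrightarrow> 0 \<le> poisson_coeff n F m"
  unfolding poisson_coeff_def fact_prod_def by (intro sum_nonneg divide_nonneg_nonneg prod_nonneg) auto

lemma poisson_expect_sums_nonneg:
  assumes l: "0 < l" and F: "exp_growth n F" and nonneg: "\<And>k. 0 \<le> F k"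
  shows "(\<lambda>m. exp (- (n * l)) * (poisson_coeff n F m * l ^ m)) sums poisson_expect n F l"
proof -
  define a where "a m = exp (- (n * l)) * (poisson_coeff n F m * l ^ m)" for m
  have a_nonneg: "0 \<le> a m" for m
    unfolding a_def using l nonneg by (simp add: poisson_coeff_nonneg)
  have w_nonneg: "0 \<le> exp (- (n * l)) * l ^ m / fact_prod n k" for m k
    using l fact_prod_pos[of n k] by (intro divide_nonneg_pos mult_nonneg_nonneg) auto
  have a_eq: "ennreal (a m) = (\<Sum>k\<in>mass_level n m.
      ennreal (exp (- (n * l)) * l ^ m / fact_prod n k) * ennreal (F k))" for m
  proof -
    have "a m = (\<Sum>k\<in>mass_level n m. exp (- (n * l)) * l ^ m / fact_prod n k * F k)"
      unfolding a_def poisson_coeff_def sum_distrib_right sum_distrib_left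
      by (rule sum.cong) (simp_all add: divide_inverse mult_ac)
    also have "ennreal \<dots> = (\<Sum>k\<in>mass_level n m. ennreal (exp (- (n * l)) * l ^ m / fact_prod n k * F k))"
      by (rule sum_ennreal[symmetric]) (rule mult_nonneg_nonneg[OF w_nonneg nonneg])
    also have "\<dots> = (\<Sum>k\<in>mass_level n m.
        ennreal (exp (- (n * l)) * l ^ m / fact_prod n k) * ennreal (F k))"
      by (intro sum.cong refl ennreal_mult w_nonneg nonneg)
    finally show ?thesis .
  qed
  have "(\<Sum>m. ennreal (a m)) = ennreal (poisson_expect n F l)"
    unfolding a_eq poisson_expect_def nn_integral_poisson_prod[OF l, symmetric]
    using integrable_poisson_prod[OF l F] nonneg by (intro nn_integral_eq_integral) auto
  moreover have "summable a"
    using calculation a_nonneg by (intro summable_suminf_not_top) auto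
  moreover have "0 \<le> poisson_expect n F l"
    unfolding poisson_expect_def using nonneg by (intro Bochner_Integration.integral_nonneg) auto
  ultimately have "suminf a = poisson_expect n F l"
    using a_nonneg suminf_nonneg[of a] by (simp add: suminf_ennreal2)
  with \<open>summable a\<close> show ?thesis
    unfolding a_def[abs_def] by (simp add: sums_iff)
qed

lemma poisson_expect_sums:
  assumes l: "0 < l" and F: "exp_growth n F"
  shows "(\<lambda>m. exp (- (n * l)) * (poisson_coeff n F m * l ^ m)) sums poisson_expect n F l"
proof -
  define Fp Fm where "Fp k = max (F k) 0" and "Fm k = max (- F k) 0" for k
  have F_eq: "F k = Fp k - Fm k" for k
    by (auto simp: Fp_def Fm_def)
  have Fp: "exp_growth n Fp" and Fm: "exp_growth n Fm"
    unfolding Fp_def Fm_def by (rule exp_growth_mono[OF F], force)+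
  have E: "poisson_expect n F l = poisson_expect n Fp l - poisson_expect n Fm l"
    unfolding poisson_expect_def F_eq
    by (rule Bochner_Integration.integral_diff) (intro integrable_poisson_prod l Fp Fm)+
  have C: "poisson_coeff n F m = poisson_coeff n Fp m - poisson_coeff n Fm m" for m
    unfolding poisson_coeff_def F_eq by (simp add: sum_subtractf diff_divide_distrib)
  have "(\<lambda>m. exp (- (n * l)) * (poisson_coeff n Fp m * l ^ m)
      - exp (- (n * l)) * (poisson_coeff n Fm m * l ^ m))
      sums (poisson_expect n Fp l - poisson_expect n Fm l)"
    by (intro sums_diff poisson_expect_sums_nonneg l Fp Fm) (auto simp: Fp_def Fm_def)
  then show ?thesis
    unfolding E C by (simp add: left_diff_distrib right_diff_distrib)
qed

lemma incr_apply: "incr i k j = (if j = i then Suc (k i) else k j)"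
  by (simp add: incr_def)

lemma sum_incr_weighted:
  fixes w :: "nat \<Rightarrow> 'a::comm_semiring_1"
  assumes "i \<in> A" and "finite A"
  shows "(\<Sum>j\<in>A. of_nat (incr i k j) * w j) = (\<Sum>j\<in>A. of_nat (k j) * w j) + w i"
proof -
  have "(\<Sum>j\<in>A. of_nat (incr i k j) * w j) = of_nat (Suc (k i)) * w i + (\<Sum>j\<in>A - {i}. of_nat (k j) * w j)"
    using assms by (simp add: sum.remove incr_apply)
  also have "\<dots> = (\<Sum>j\<in>A. of_nat (k j) * w j) + w i"
    using assms by (simp add: sum.remove algebra_simps)
  finally show ?thesis .
qed

lemma sum_incr:
  assumes "i \<in> A" and "finite A"
  shows "(\<Sum>j\<in>A. incr i k j) = Suc (\<Sum>j\<in>A. k j)"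
  using sum_incr_weighted[OF assms, of k "\<lambda>_. 1 :: nat"] by simp

lemma fact_prod_incr:
  assumes "i < n"
  shows "fact_prod n (incr i k) = Suc (k i) * fact_prod n k"
proof -
  have "fact_prod n (incr i k) = fact (Suc (k i)) * (\<Prod>j\<in>{..<n} - {i}. fact (k j))"
    using assms by (simp add: fact_prod_def prod.remove incr_apply)
  also have "\<dots> = Suc (k i) * fact_prod n k"
    using assms by (simp add: fact_prod_def prod.remove)
  finally show ?thesis .
qed

lemma incr_mass_level:
  assumes k: "k \<in> mass_level n m" and i: "i < n"
  shows "incr i k \<in> mass_level n (Suc m)"
proof -
  have "(\<Sum>j<n. incr i k j) = Suc m"
    using k i by (simp add: sum_incr mass_level_def)
  then show ?thesis
    using k i by (auto simp: mass_level_def PiE_def extensional_def incr_apply)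
qed

lemma sum_mass_level_incr:
  assumes i: "i < n"
  shows "(\<Sum>k\<in>mass_level n m. F (incr i k) / fact_prod n k)
       = (\<Sum>k\<in>mass_level n (Suc m). F k * k i / fact_prod n k)"
proof -
  define T where "T = {k \<in> mass_level n (Suc m). 0 < k i}"
  have "(\<Sum>k\<in>mass_level n m. F (incr i k) / fact_prod n k) = (\<Sum>k\<in>T. F k * k i / fact_prod n k)"
  proof (rule sum.reindex_bij_witness[where j = "incr i" and i = "\<lambda>k. k(i := k i - 1)"])
    fix k assume k: "k \<in> mass_level n m"
    show "(incr i k)(i := incr i k i - 1) = k"
      by (auto simp: incr_apply)
    show "incr i k \<in> T"
      using incr_mass_level[OF k i] by (simp add: T_def incr_apply)
    show "F (incr i k) * incr i k i / fact_prod n (incr i k) = F (incr i k) / fact_prod n k"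
      using fact_prod_pos[of n k] by (simp add: fact_prod_incr[OF i] incr_apply del: of_nat_Suc)
  next
    fix k assume k: "k \<in> T"
    then show k_eq: "incr i (k(i := k i - 1)) = k"
      by (simp add: T_def incr_def)
    have "Suc (\<Sum>j<n. (k(i := k i - 1)) j) = Suc m"
      using k i sum_incr[of i "{..<n}" "k(i := k i - 1)"] unfolding k_eq
      by (simp add: T_def mass_level_def)
    then show "k(i := k i - 1) \<in> mass_level n m"
      using k i by (auto simp: T_def mass_level_def PiE_def extensional_def)
  qed
  also have "\<dots> = (\<Sum>k\<in>mass_level n (Suc m). F k * k i / fact_prod n k)"
    by (rule sum.mono_neutral_left) (auto simp: T_def finite_mass_level)
  finally show ?thesis .
qed

lemma poisson_power_series:
  assumes "0 < l" and "exp_growth n F"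
  shows "(\<lambda>m. poisson_coeff n F m * l ^ m) sums (exp (n * l) * poisson_expect n F l)"
  using sums_mult[OF poisson_expect_sums[OF assms], of "exp (n * l)"]
  by (simp add: exp_minus_inverse mult.assoc[symmetric])

lemma poisson_coeff_fwd_diff:
  "poisson_coeff n (fwd_diff n F) m = Suc m * poisson_coeff n F (Suc m) - n * poisson_coeff n F m"
proof -
  have "poisson_coeff n (fwd_diff n F) m
      = (\<Sum>k\<in>mass_level n m. \<Sum>i<n. F (incr i k) / fact_prod n k) - n * poisson_coeff n F m"
    unfolding poisson_coeff_def fwd_diff_def
    by (simp add: sum_subtractf diff_divide_distrib sum_divide_distrib sum_distrib_left)
  also have "(\<Sum>k\<in>mass_level n m. \<Sum>i<n. F (incr i k) / fact_prod n k)
      = (\<Sum>i<n. \<Sum>k\<in>mass_level n (Suc m). F k * k i / fact_prod n k)"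
    by (subst sum.swap) (simp add: sum_mass_level_incr)
  also have "\<dots> = (\<Sum>k\<in>mass_level n (Suc m). F k / fact_prod n k * (\<Sum>i<n. k i))"
    by (subst sum.swap) (simp add: sum_distrib_left)
  also have "\<dots> = Suc m * poisson_coeff n F (Suc m)"
    by (simp add: poisson_coeff_def mass_level_def sum_distrib_left mult.commute)
  finally show ?thesis .
qed

lemma exp_growth_fwd_diff:
  assumes "exp_growth n F"
  shows "exp_growth n (fwd_diff n F)"
proof -
  obtain M where M: "\<And>k. k \<in> PiE {..<n} (\<lambda>_. UNIV) \<Longrightarrow> \<bar>F k\<bar> \<le> M * 4 ^ (\<Sum>i<n. k i)"
    using assms unfolding exp_growth_def by blast
  have "\<bar>fwd_diff n F k\<bar> \<le> (n * (5 * M)) * 4 ^ (\<Sum>i<n. k i)" if k: "k \<in> PiE {..<n} (\<lambda>_. UNIV)" for k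
  proof -
    have "\<bar>F (incr i k) - F k\<bar> \<le> 5 * M * 4 ^ (\<Sum>i<n. k i)" if i: "i < n" for i
    proof -
      have "incr i k \<in> mass_level n (Suc (\<Sum>i<n. k i))"
        using k i by (intro incr_mass_level) (simp add: mass_level_def)
      then have "\<bar>F (incr i k)\<bar> \<le> M * 4 ^ Suc (\<Sum>i<n. k i)"
        using M unfolding mass_level_def by force
      then show ?thesis
        using M[OF k] by simp
    qed
    then have "\<bar>fwd_diff n F k\<bar> \<le> (\<Sum>i<n. 5 * M * 4 ^ (\<Sum>i<n. k i))"
      unfolding fwd_diff_def by (intro order.trans[OF sum_abs] sum_mono) auto
    then show ?thesis
      by simp
  qed
  then show ?thesis
    unfolding exp_growth_def by blast
qed

text \<open>Differentiate the power series of \<open>exp (n * l) * poisson_expect n F l\<close> termwise; the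
  recurrence \<open>poisson_coeff_fwd_diff\<close> identifies the result.\<close>
lemma has_field_derivative_poisson_expect:
  assumes l: "0 < l" and F: "exp_growth n F"
  shows "(poisson_expect n F has_field_derivative poisson_expect n (fwd_diff n F) l) (at l)"
proof -
  define c where "c = poisson_coeff n F"
  define S where "S x = (\<Sum>m. c m * x ^ m)" for x :: real
  have S_sums: "(\<lambda>m. c m * x ^ m) sums (exp (n * x) * poisson_expect n F x)" if "0 < x" for x :: real
    unfolding c_def by (rule poisson_power_series[OF that F])
  have E_eq: "poisson_expect n F x = exp (- (n * x)) * S x" if "0 < x" for x :: real
    using sums_unique[OF S_sums[OF that]] unfolding S_def by (simp add: exp_minus field_simps)
  have S_l: "(\<lambda>m. c m * l ^ m) sums S l"
    using S_sums[OF l] unfolding S_def by (simp add: sums_iff)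
  have S_deriv: "(S has_field_derivative (\<Sum>m. diffs c m * l ^ m)) (at l)"
    unfolding S_def[abs_def]
    by (rule termdiffs_strong[of _ "l + 1"]) (use S_sums[of "l + 1"] l in \<open>auto simp: sums_iff\<close>)
  have "(\<lambda>m. diffs c m * l ^ m) = (\<lambda>m. poisson_coeff n (fwd_diff n F) m * l ^ m + n * (c m * l ^ m))"
    by (auto simp: diffs_def c_def poisson_coeff_fwd_diff algebra_simps)
  moreover have "(\<lambda>m. poisson_coeff n (fwd_diff n F) m * l ^ m + n * (c m * l ^ m))
      sums (exp (n * l) * poisson_expect n (fwd_diff n F) l + n * S l)"
    by (intro sums_add sums_mult S_l poisson_power_series l exp_growth_fwd_diff F)
  ultimately have diffs_eq: "(\<Sum>m. diffs c m * l ^ m) = exp (n * l) * poisson_expect n (fwd_diff n F) l + n * S l"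
    by (simp add: sums_iff)
  have "((\<lambda>x. exp (- (n * x)) * S x) has_field_derivative
      exp (- (n * l)) * (- n) * S l + exp (- (n * l)) * (\<Sum>m. diffs c m * l ^ m)) (at l)"
    by (rule derivative_eq_intros S_deriv refl | simp)+
  also have "exp (- (n * l)) * (- n) * S l + exp (- (n * l)) * (\<Sum>m. diffs c m * l ^ m)
      = poisson_expect n (fwd_diff n F) l"
    unfolding diffs_eq by (simp add: exp_minus field_simps)
  finally show ?thesis
    by (rule has_field_derivative_transform_within_open[of _ _ _ "{0<..}"]) (use l E_eq in auto)
qed

lemma fwd_diff_fwd_diff:
  "fwd_diff n (fwd_diff n F) k = (\<Sum>j<n. \<Sum>i<n. F (incr i (incr j k)) - F (incr j k) - F (incr i k) + F k)"
  unfolding fwd_diff_def by (simp add: sum_subtractf sum.distrib algebra_simps)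

lemma has_field_derivative_poisson_expect_scaled:
  assumes "0 < \<alpha>" and "0 < c" and F: "exp_growth n F"
  shows "((\<lambda>\<alpha>. poisson_expect n F (\<alpha> * c)) has_field_derivative
           c * poisson_expect n (fwd_diff n F) (\<alpha> * c)) (at \<alpha>)"
proof -
  have "((\<lambda>\<alpha>. \<alpha> * c) has_field_derivative c) (at \<alpha>)"
    by (auto intro!: derivative_eq_intros)
  from DERIV_chain2[OF has_field_derivative_poisson_expect[OF _ F] this] show ?thesis
    using assms by (simp add: mult.commute)
qed

lemma poisson_expect_nonneg: "(\<And>k. 0 \<le> F k) \<Longrightarrow> 0 \<le> poisson_expect n F l"
  unfolding poisson_expect_def by (rule Bochner_Integration.integral_nonneg) auto

lemma poisson_expect_abs_le:
  assumes l: "0 < l" and bound: "\<And>k. \<bar>F k\<bar> \<le> c"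
  shows "\<bar>poisson_expect n F l\<bar> \<le> c"
  unfolding poisson_expect_def using bound
  by (intro prob_space.abs_integral_le_const prob_space_poisson_prod integrable_poisson_prod l
      exp_growth_bounded[OF bound])

lemma mono_on_poisson_expect_fwd_diff:
  assumes F: "exp_growth n F" and convex: "\<And>k. 0 \<le> fwd_diff n (fwd_diff n F) k" and c: "0 < c"
  shows "mono_on {0<..} (\<lambda>\<alpha>. c * poisson_expect n (fwd_diff n F) (\<alpha> * c))"
proof (rule mono_onI)
  fix x y :: real assume x: "x \<in> {0<..}" and "y \<in> {0<..}" "x \<le> y"
  have "poisson_expect n (fwd_diff n F) (x * c) \<le> poisson_expect n (fwd_diff n F) (y * c)"
  proof (rule DERIV_nonneg_imp_nondecreasing[of "x * c" "y * c"])
    show "x * c \<le> y * c"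
      using \<open>x \<le> y\<close> c by simp
    fix z assume "x * c \<le> z"
    then have "0 < z"
      using x c by (metis greaterThan_iff mult_pos_pos order_less_le_trans)
    then show "\<exists>d. (poisson_expect n (fwd_diff n F) has_real_derivative d) (at z) \<and> 0 \<le> d"
      using convex
      by (intro exI[of _ "poisson_expect n (fwd_diff n (fwd_diff n F)) z"] conjI
          has_field_derivative_poisson_expect exp_growth_fwd_diff F poisson_expect_nonneg)
  qed
  then show "c * poisson_expect n (fwd_diff n F) (x * c) \<le> c * poisson_expect n (fwd_diff n F) (y * c)"
    using c by simp
qed

section \<open>The spin system at fixed couplings\<close>

lemma spin_cases: "\<sigma> \<in> spins n \<Longrightarrow> i < n \<Longrightarrow> \<sigma> i = -1 \<or> \<sigma> i = 1"
  unfolding spins_def by (auto simp: PiE_def Pi_def)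

lemma abs_spin: "\<sigma> \<in> spins n \<Longrightarrow> i < n \<Longrightarrow> \<bar>\<sigma> i\<bar> = 1"
  using spin_cases by fastforce

lemma finite_spins: "finite (spins n)"
  unfolding spins_def by (intro finite_PiE) auto

lemma spins_nonempty: "spins n \<noteq> {}"
  unfolding spins_def by (simp add: PiE_eq_empty_iff)

lemma card_spins: "card (spins n) = 2 ^ n"
  unfolding spins_def by (simp add: card_PiE numeral_2_eq_2)

lemma abs_spin_prod: "\<sigma> \<in> spins n \<Longrightarrow> X \<subseteq> {..<n} \<Longrightarrow> \<bar>spin_prod \<sigma> X\<bar> = 1"
  unfolding spin_prod_def abs_prod by (intro prod.neutral) (auto intro: abs_spin)

lemma exp_spin:
  assumes "\<sigma> \<in> spins n" and "i < n"
  shows "exp (h * \<sigma> i) = cosh h + \<sigma> i * sinh h"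
  using spin_cases[OF assms] by (auto simp: cosh_plus_sinh cosh_minus_sinh[symmetric] algebra_simps)

definition boltzmann_sum ::
  "nat \<Rightarrow> real \<Rightarrow> real \<Rightarrow> (nat set \<Rightarrow> real) \<Rightarrow> (nat \<Rightarrow> nat) \<Rightarrow> ((nat \<Rightarrow> real) \<Rightarrow> real) \<Rightarrow> real" where
  "boltzmann_sum n h0 h1 J \<tau> f = (\<Sum>\<sigma>\<in>spins n. f \<sigma> * exp (- hamiltonian n h0 h1 J \<tau> \<sigma>))"

lemma partition_fn_eq_boltzmann_sum: "partition_fn n h0 h1 J \<tau> = boltzmann_sum n h0 h1 J \<tau> (\<lambda>_. 1)"
  by (simp add: partition_fn_def boltzmann_sum_def)

lemma gibbs_eq_boltzmann_sum: "gibbs n h0 h1 J \<tau> f = boltzmann_sum n h0 h1 J \<tau> f / partition_fn n h0 h1 J \<tau>"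
  by (simp add: gibbs_def boltzmann_sum_def)

lemma partition_fn_pos: "0 < partition_fn n h0 h1 J \<tau>"
  unfolding partition_fn_def using finite_spins spins_nonempty by (intro sum_pos) auto

lemma partition_fn_nonzero [simp]: "partition_fn n h0 h1 J \<tau> \<noteq> 0"
  using partition_fn_pos[of n h0 h1 J \<tau>] by simp

lemma boltzmann_sum_mono:
  "(\<And>\<sigma>. \<sigma> \<in> spins n \<Longrightarrow> f \<sigma> \<le> g \<sigma>) \<Longrightarrow> boltzmann_sum n h0 h1 J \<tau> f \<le> boltzmann_sum n h0 h1 J \<tau> g"
  unfolding boltzmann_sum_def by (intro sum_mono mult_right_mono) auto

lemma boltzmann_sum_linear:
  "boltzmann_sum n h0 h1 J \<tau> (\<lambda>\<sigma>. a * f \<sigma> + b * g \<sigma>)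
     = a * boltzmann_sum n h0 h1 J \<tau> f + b * boltzmann_sum n h0 h1 J \<tau> g"
  unfolding boltzmann_sum_def by (simp add: sum.distrib sum_distrib_left algebra_simps)

lemma hamiltonian_incr:
  assumes "i < n"
  shows "hamiltonian n h0 h1 J (incr i \<tau>) \<sigma> = hamiltonian n h0 h1 J \<tau> \<sigma> - h1 * \<sigma> i"
proof -
  have "(\<Sum>j<n. real (incr i \<tau> j) * \<sigma> j) = (\<Sum>j<n. real (\<tau> j) * \<sigma> j) + \<sigma> i"
    by (rule sum_incr_weighted) (use assms in auto)
  then show ?thesis
    unfolding hamiltonian_def by (simp add: algebra_simps)
qed

lemma boltzmann_sum_incr:
  assumes "i < n"
  shows "boltzmann_sum n h0 h1 J (incr i \<tau>) f = boltzmann_sum n h0 h1 J \<tau> (\<lambda>\<sigma>. exp (h1 * \<sigma> i) * f \<sigma>)"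
  unfolding boltzmann_sum_def hamiltonian_incr[OF assms] by (simp add: exp_add[symmetric] mult_ac)

lemma boltzmann_sum_incr_cosh:
  assumes "i < n"
  shows "boltzmann_sum n h0 h1 J (incr i \<tau>) f
       = cosh h1 * boltzmann_sum n h0 h1 J \<tau> f + sinh h1 * boltzmann_sum n h0 h1 J \<tau> (\<lambda>\<sigma>. \<sigma> i * f \<sigma>)"
proof -
  have "boltzmann_sum n h0 h1 J (incr i \<tau>) f = boltzmann_sum n h0 h1 J \<tau> (\<lambda>\<sigma>. exp (h1 * \<sigma> i) * f \<sigma>)"
    by (rule boltzmann_sum_incr[OF assms])
  also have "\<dots> = boltzmann_sum n h0 h1 J \<tau> (\<lambda>\<sigma>. cosh h1 * f \<sigma> + sinh h1 * (\<sigma> i * f \<sigma>))"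
    unfolding boltzmann_sum_def by (intro sum.cong refl) (simp add: exp_spin assms algebra_simps)
  finally show ?thesis
    by (simp add: boltzmann_sum_linear)
qed

lemma partition_fn_incr_bounds:
  assumes i: "i < n" and h1: "0 \<le> h1"
  shows "exp (- h1) * partition_fn n h0 h1 J \<tau> \<le> partition_fn n h0 h1 J (incr i \<tau>)"
    and "partition_fn n h0 h1 J (incr i \<tau>) \<le> exp h1 * partition_fn n h0 h1 J \<tau>"
proof -
  have exp_bounds: "exp (- h1) \<le> exp (h1 * \<sigma> i) \<and> exp (h1 * \<sigma> i) \<le> exp h1" if "\<sigma> \<in> spins n" for \<sigma>
    using spin_cases[OF that i] h1 by auto
  have Z_incr: "partition_fn n h0 h1 J (incr i \<tau>) = boltzmann_sum n h0 h1 J \<tau> (\<lambda>\<sigma>. exp (h1 * \<sigma> i) * 1)"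
    by (simp add: partition_fn_eq_boltzmann_sum boltzmann_sum_incr i)
  have Z_scaled: "c * partition_fn n h0 h1 J \<tau> = boltzmann_sum n h0 h1 J \<tau> (\<lambda>\<sigma>. c * 1)" for c
    by (simp add: partition_fn_eq_boltzmann_sum boltzmann_sum_def sum_distrib_left)
  show "exp (- h1) * partition_fn n h0 h1 J \<tau> \<le> partition_fn n h0 h1 J (incr i \<tau>)"
    unfolding Z_incr Z_scaled by (rule boltzmann_sum_mono) (use exp_bounds in auto)
  show "partition_fn n h0 h1 J (incr i \<tau>) \<le> exp h1 * partition_fn n h0 h1 J \<tau>"
    unfolding Z_incr Z_scaled by (rule boltzmann_sum_mono) (use exp_bounds in auto)
qed

lemma abs_hamiltonian_le:
  assumes s: "\<sigma> \<in> spins n" and h0: "0 \<le> h0" and h1: "0 \<le> h1"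
  shows "\<bar>hamiltonian n h0 h1 J \<tau> \<sigma>\<bar> \<le> (\<Sum>X\<in>Pow {..<n}. \<bar>J X\<bar>) + h0 * n + h1 * (\<Sum>i<n. real (\<tau> i))"
proof -
  have "\<bar>\<Sum>X\<in>Pow {..<n}. J X * spin_prod \<sigma> X\<bar> \<le> (\<Sum>X\<in>Pow {..<n}. \<bar>J X\<bar>)"
    by (rule order.trans[OF sum_abs]) (auto simp: abs_mult abs_spin_prod[OF s])
  moreover have "\<bar>h0 * (\<Sum>i<n. \<sigma> i)\<bar> \<le> h0 * n"
    using h0 order.trans[OF sum_abs, of \<sigma> "{..<n}"] by (auto simp: abs_mult abs_spin[OF s] mult_left_mono)
  moreover have "\<bar>h1 * (\<Sum>i<n. \<tau> i * \<sigma> i)\<bar> \<le> h1 * (\<Sum>i<n. real (\<tau> i))"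
    using h1 order.trans[OF sum_abs, of "\<lambda>i. \<tau> i * \<sigma> i" "{..<n}"]
    by (auto simp: abs_mult abs_spin[OF s] mult_left_mono)
  ultimately show ?thesis
    unfolding hamiltonian_def by linarith
qed

lemma abs_ln_partition_fn_le:
  assumes h0: "0 \<le> h0" and h1: "0 \<le> h1"
  shows "\<bar>ln (partition_fn n h0 h1 J \<tau>)\<bar>
       \<le> n * ln 2 + (\<Sum>X\<in>Pow {..<n}. \<bar>J X\<bar>) + h0 * n + h1 * (\<Sum>i<n. real (\<tau> i))"
proof -
  define B where "B = (\<Sum>X\<in>Pow {..<n}. \<bar>J X\<bar>) + h0 * n + h1 * (\<Sum>i<n. real (\<tau> i))"
  have H: "\<bar>hamiltonian n h0 h1 J \<tau> \<sigma>\<bar> \<le> B" if "\<sigma> \<in> spins n" for \<sigma>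
    unfolding B_def by (rule abs_hamiltonian_le[OF that h0 h1])
  obtain \<sigma> where \<sigma>: "\<sigma> \<in> spins n"
    using spins_nonempty by blast
  have "exp (- B) \<le> exp (- hamiltonian n h0 h1 J \<tau> \<sigma>)"
    using H[OF \<sigma>] by simp
  also have "\<dots> \<le> partition_fn n h0 h1 J \<tau>"
    unfolding partition_fn_def by (rule member_le_sum[OF \<sigma>]) (auto simp: finite_spins)
  finally have "- B \<le> ln (partition_fn n h0 h1 J \<tau>)"
    using partition_fn_pos by (subst ln_ge_iff) auto
  moreover have "partition_fn n h0 h1 J \<tau> \<le> 2 ^ n * exp B"
    unfolding partition_fn_def using sum_mono[of "spins n" _ "\<lambda>_. exp B"] H
    by (fastforce simp: card_spins abs_le_iff)
  then have "ln (partition_fn n h0 h1 J \<tau>) \<le> ln (2 ^ n * exp B)"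
    using partition_fn_pos by (subst ln_le_cancel_iff) auto
  moreover have "ln (2 ^ n * exp B) = n * ln 2 + B"
    by (simp add: ln_mult ln_realpow)
  moreover have "0 \<le> B"
    using h0 h1 unfolding B_def by (auto intro!: add_nonneg_nonneg mult_nonneg_nonneg sum_nonneg)
  moreover have "0 \<le> real n * ln 2"
    by simp
  ultimately show ?thesis
    unfolding B_def abs_le_iff by linarith
qed

definition pressure_envelope :: "nat \<Rightarrow> real \<Rightarrow> real \<Rightarrow> (nat set \<Rightarrow> real) \<Rightarrow> real" where
  "pressure_envelope n h0 h1 J = ln 2 + h0 + h1 + (\<Sum>X\<in>Pow {..<n}. \<bar>J X\<bar>) / n"

lemma pressure_envelope_nonneg: "0 \<le> h0 \<Longrightarrow> 0 \<le> h1 \<Longrightarrow> 0 \<le> pressure_envelope n h0 h1 J"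
  unfolding pressure_envelope_def by (intro add_nonneg_nonneg divide_nonneg_nonneg sum_nonneg) auto

lemma abs_pressure_le:
  assumes n: "1 \<le> n" and h0: "0 \<le> h0" and h1: "0 \<le> h1"
  shows "\<bar>pressure n h0 h1 J \<tau>\<bar> \<le> pressure_envelope n h0 h1 J * 2 ^ (\<Sum>i<n. \<tau> i)"
proof -
  define s where "s = (\<Sum>i<n. \<tau> i)"
  define c where "c = ln 2 + h0 + (\<Sum>X\<in>Pow {..<n}. \<bar>J X\<bar>) / n"
  have c: "0 \<le> c"
    unfolding c_def using h0 by (intro add_nonneg_nonneg divide_nonneg_nonneg sum_nonneg) auto
  have "real s / n \<le> real s / 1"
    using n by (intro divide_left_mono) auto
  also have "real s \<le> 2 ^ s"
    using less_exp[of s] by (metis less_imp_le of_nat_le_iff of_nat_numeral of_nat_power)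
  finally have "real s / n \<le> 2 ^ s"
    by simp
  have "\<bar>pressure n h0 h1 J \<tau>\<bar> = \<bar>ln (partition_fn n h0 h1 J \<tau>)\<bar> / n"
    unfolding pressure_def by simp
  also have "\<dots> \<le> (n * ln 2 + (\<Sum>X\<in>Pow {..<n}. \<bar>J X\<bar>) + h0 * n + h1 * s) / n"
    using abs_ln_partition_fn_le[OF h0 h1, of n J \<tau>] unfolding s_def
    by (intro divide_right_mono) auto
  also have "\<dots> = c + h1 * (s / n)"
    using n by (simp add: c_def field_simps)
  also have "\<dots> \<le> c * 2 ^ s + h1 * 2 ^ s"
    using c h1 \<open>real s / n \<le> 2 ^ s\<close> by (intro add_mono mult_left_mono) (auto simp: mult_le_cancel_left1)
  finally show ?thesis
    unfolding pressure_envelope_def c_def s_def by (simp add: algebra_simps)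
qed

lemma exp_growth_pressure:
  "1 \<le> n \<Longrightarrow> 0 \<le> h0 \<Longrightarrow> 0 \<le> h1 \<Longrightarrow> exp_growth n (pressure n h0 h1 J)"
  by (rule exp_growth_two_pow[OF abs_pressure_le])

lemma abs_fwd_diff_pressure_le:
  assumes n: "1 \<le> n" and h1: "0 \<le> h1"
  shows "\<bar>fwd_diff n (pressure n h0 h1 J) \<tau>\<bar> \<le> h1"
proof -
  have "\<bar>pressure n h0 h1 J (incr i \<tau>) - pressure n h0 h1 J \<tau>\<bar> \<le> h1 / n" if i: "i < n" for i
  proof -
    let ?Z = "partition_fn n h0 h1 J \<tau>" and ?Z' = "partition_fn n h0 h1 J (incr i \<tau>)"
    have "ln (exp (- h1) * ?Z) \<le> ln ?Z'" and "ln ?Z' \<le> ln (exp h1 * ?Z)"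
      using partition_fn_incr_bounds[OF i h1, of h0 J \<tau>] partition_fn_pos[of n h0 h1 J]
      by (subst ln_le_cancel_iff; simp)+
    then have "\<bar>ln ?Z' - ln ?Z\<bar> \<le> h1"
      by (auto simp: ln_mult)
    then show ?thesis
      unfolding pressure_def using n by (simp add: diff_divide_distrib[symmetric] divide_right_mono)
  qed
  then have "\<bar>fwd_diff n (pressure n h0 h1 J) \<tau>\<bar> \<le> (\<Sum>i<n. h1 / n)"
    unfolding fwd_diff_def by (intro order.trans[OF sum_abs] sum_mono) auto
  then show ?thesis
    using n by simp
qed

definition nonneg_correlations :: "nat \<Rightarrow> real \<Rightarrow> real \<Rightarrow> (nat set \<Rightarrow> real) \<Rightarrow> bool" where
  "nonneg_correlations n h0 h1 J \<longleftrightarrow> (\<forall>\<tau>. \<forall>i<n. \<forall>j<n.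
     gibbs n h0 h1 J \<tau> (\<lambda>\<sigma>. \<sigma> i * \<sigma> j) - gibbs n h0 h1 J \<tau> (\<lambda>\<sigma>. \<sigma> i) * gibbs n h0 h1 J \<tau> (\<lambda>\<sigma>. \<sigma> j) \<ge> 0)"

text \<open>Writing \<open>exp (h1 * \<sigma> i) = cosh h1 + \<sigma> i * sinh h1\<close>, the defect of this inequality is
  \<open>sinh h1 ^ 2\<close> times the covariance of \<open>\<sigma> i\<close> and \<open>\<sigma> j\<close>, scaled by \<open>Z\<^sup>2\<close>.\<close>
lemma partition_fn_incr_supermodular:
  assumes i: "i < n" and j: "j < n"
    and cov: "0 \<le> gibbs n h0 h1 J \<tau> (\<lambda>\<sigma>. \<sigma> i * \<sigma> j)
                - gibbs n h0 h1 J \<tau> (\<lambda>\<sigma>. \<sigma> i) * gibbs n h0 h1 J \<tau> (\<lambda>\<sigma>. \<sigma> j)"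
  shows "partition_fn n h0 h1 J (incr i \<tau>) * partition_fn n h0 h1 J (incr j \<tau>)
       \<le> partition_fn n h0 h1 J (incr i (incr j \<tau>)) * partition_fn n h0 h1 J \<tau>"
proof -
  let ?B = "boltzmann_sum n h0 h1 J \<tau>"
  define Z Bi Bj C where "Z = ?B (\<lambda>_. 1)" and "Bi = ?B (\<lambda>\<sigma>. \<sigma> i)" and "Bj = ?B (\<lambda>\<sigma>. \<sigma> j)"
    and "C = ?B (\<lambda>\<sigma>. \<sigma> i * \<sigma> j)"
  have Z_pos: "0 < Z"
    using partition_fn_pos unfolding Z_def partition_fn_eq_boltzmann_sum by metis
  have "0 \<le> (C / Z - Bi / Z * (Bj / Z)) * Z ^ 2"
    using cov by (simp add: gibbs_eq_boltzmann_sum partition_fn_eq_boltzmann_sum Z_def Bi_def Bj_def C_def)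
  also have "\<dots> = C * Z - Bi * Bj"
    using Z_pos by (simp add: field_simps power2_eq_square)
  finally have cov': "0 \<le> C * Z - Bi * Bj" .
  have Zi: "partition_fn n h0 h1 J (incr i \<tau>) = cosh h1 * Z + sinh h1 * Bi"
    and Zj: "partition_fn n h0 h1 J (incr j \<tau>) = cosh h1 * Z + sinh h1 * Bj"
    using i j by (simp_all add: partition_fn_eq_boltzmann_sum boltzmann_sum_incr_cosh Z_def Bi_def Bj_def)
  have Zij: "partition_fn n h0 h1 J (incr i (incr j \<tau>))
      = cosh h1 * (cosh h1 * Z + sinh h1 * Bj) + sinh h1 * (cosh h1 * Bi + sinh h1 * C)"
    using i j by (simp add: partition_fn_eq_boltzmann_sum boltzmann_sum_incr_cosh Z_def Bi_def Bj_def
        C_def mult.commute)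
  have "partition_fn n h0 h1 J (incr i (incr j \<tau>)) * partition_fn n h0 h1 J \<tau>
      - partition_fn n h0 h1 J (incr i \<tau>) * partition_fn n h0 h1 J (incr j \<tau>)
      = sinh h1 ^ 2 * (C * Z - Bi * Bj)"
    unfolding Zi Zj Zij by (simp add: partition_fn_eq_boltzmann_sum Z_def power2_eq_square algebra_simps)
  also have "\<dots> \<ge> 0"
    using cov' by simp
  finally show ?thesis
    by simp
qed

lemma fwd_diff_fwd_diff_pressure_nonneg:
  assumes corr: "nonneg_correlations n h0 h1 J"
  shows "0 \<le> fwd_diff n (fwd_diff n (pressure n h0 h1 J)) \<tau>"
  unfolding fwd_diff_fwd_diff
proof (intro sum_nonneg)
  fix i j assume "i \<in> {..<n}" "j \<in> {..<n}"
  let ?Z = "partition_fn n h0 h1 J"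
  have "?Z (incr i \<tau>) * ?Z (incr j \<tau>) \<le> ?Z (incr i (incr j \<tau>)) * ?Z \<tau>"
    using corr \<open>i \<in> {..<n}\<close> \<open>j \<in> {..<n}\<close> unfolding nonneg_correlations_def
    by (intro partition_fn_incr_supermodular) auto
  then have "ln (?Z (incr i \<tau>) * ?Z (incr j \<tau>)) \<le> ln (?Z (incr i (incr j \<tau>)) * ?Z \<tau>)"
    using partition_fn_pos[of n h0 h1 J] by (subst ln_le_cancel_iff) auto
  then have "ln (?Z (incr i \<tau>)) + ln (?Z (incr j \<tau>)) \<le> ln (?Z (incr i (incr j \<tau>))) + ln (?Z \<tau>)"
    by (simp add: ln_mult)
  then have "0 \<le> (ln (?Z (incr i (incr j \<tau>))) - ln (?Z (incr j \<tau>)) - ln (?Z (incr i \<tau>))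
      + ln (?Z \<tau>)) / n"
    by simp
  then show "0 \<le> pressure n h0 h1 J (incr i (incr j \<tau>)) - pressure n h0 h1 J (incr j \<tau>)
      - pressure n h0 h1 J (incr i \<tau>) + pressure n h0 h1 J \<tau>"
    unfolding pressure_def by (simp add: add_divide_distrib diff_divide_distrib)
qed

section \<open>Averaging over the couplings\<close>

lemma Phat_eq_poisson_expect:
  "Phat n \<theta> h0 h1 J \<alpha> = poisson_expect n (pressure n h0 h1 J) (\<alpha> * real n powr (\<theta> - 1))"
  by (simp add: Phat_def tau_law_def poisson_expect_def poisson_prod_def)

lemma integral_fwd_diff:
  assumes "\<And>k. integrable N (\<lambda>x. G x k)"
  shows "integrable N (\<lambda>x. fwd_diff n (G x) k)"
    and "fwd_diff n (\<lambda>k. \<integral>x. G x k \<partial>N) k = (\<integral>x. fwd_diff n (G x) k \<partial>N)"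
  using assms unfolding fwd_diff_def
  by (auto simp: Bochner_Integration.integral_sum Bochner_Integration.integral_diff)

locale random_couplings =
  fixes M :: "nat set \<Rightarrow> real measure" and n :: nat and h0 h1 :: real
  assumes prob_space_M: "\<And>X. prob_space (M X)"
    and sets_M: "\<And>X. sets (M X) = sets borel"
    and integrable_M: "\<And>X. integrable (M X) (\<lambda>x. x)"
    and n_pos: "1 \<le> n" and h0_nonneg: "0 \<le> h0" and h1_nonneg: "0 \<le> h1"
begin

abbreviation JM :: "(nat set \<Rightarrow> real) measure" where
  "JM \<equiv> PiM (Pow {..<n}) M"

lemma prob_space_JM: "prob_space JM"
  by (intro prob_space_PiM prob_space_M)

lemma measurable_coupling [measurable]: "X \<in> Pow {..<n} \<Longrightarrow> (\<lambda>J. J X) \<in> borel_measurable JM"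
  using measurable_component_singleton[of X "Pow {..<n}" M] sets_M measurable_cong_sets by blast

lemma integrable_abs_coupling:
  assumes X: "X \<in> Pow {..<n}"
  shows "integrable JM (\<lambda>J. \<bar>J X\<bar>)"
proof -
  have "distr JM (M X) (\<lambda>J. J X) = M X"
    by (rule distr_PiM_component[OF prob_space_M X])
  moreover have "integrable (M X) abs"
    using integrable_M by (rule integrable_abs)
  moreover have "abs \<in> borel_measurable (M X)"
    by (simp add: measurable_cong_sets[OF sets_M refl])
  ultimately show ?thesis
    using integrable_distr_eq[OF measurable_component_singleton[OF X], of abs M] by simp
qed

lemma integrable_pressure_envelope: "integrable JM (pressure_envelope n h0 h1)"
proof -
  interpret prob_space JM
    by (rule prob_space_JM)
  show ?thesis
    unfolding pressure_envelope_def
    by (intro Bochner_Integration.integrable_add Bochner_Integration.integrable_divide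
        Bochner_Integration.integrable_sum integrable_abs_coupling integrable_const)
qed

lemma measurable_pressure: "(\<lambda>J. pressure n h0 h1 J k) \<in> borel_measurable JM"
  unfolding pressure_def partition_fn_def hamiltonian_def spin_prod_def by measurable

lemma integrable_pressure: "integrable JM (\<lambda>J. pressure n h0 h1 J k)"
proof (rule Bochner_Integration.integrable_bound)
  show "integrable JM (\<lambda>J. pressure_envelope n h0 h1 J * 2 ^ (\<Sum>i<n. k i))"
    by (intro integrable_mult_left integrable_pressure_envelope)
  show "AE J in JM. norm (pressure n h0 h1 J k) \<le> norm (pressure_envelope n h0 h1 J * 2 ^ (\<Sum>i<n. k i))"
    using abs_pressure_le[OF n_pos h0_nonneg h1_nonneg] pressure_envelope_nonneg[OF h0_nonneg h1_nonneg]
    by (auto intro!: AE_I2)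
qed (rule measurable_pressure)

lemma measurable_pressure_pair:
  "(\<lambda>(J, k). pressure n h0 h1 J k) \<in> borel_measurable (JM \<Otimes>\<^sub>M poisson_prod n l)"
proof -
  have [measurable]: "(\<lambda>x. fst x X) \<in> borel_measurable (JM \<Otimes>\<^sub>M poisson_prod n l)"
    if "X \<in> Pow {..<n}" for X
    using measurable_comp[OF measurable_fst measurable_coupling[OF that]] by (simp add: comp_def)
  have [measurable]: "(\<lambda>x. real (snd x i)) \<in> borel_measurable (JM \<Otimes>\<^sub>M poisson_prod n l)" for i
    using measurable_comp[OF measurable_snd measurable_poisson_prod] by (simp add: comp_def)
  show ?thesis
    unfolding case_prod_beta pressure_def partition_fn_def hamiltonian_def spin_prod_def by measurable
qed

lemma integrable_pressure_pair:
  assumes l: "0 < l"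
  shows "integrable (JM \<Otimes>\<^sub>M poisson_prod n l) (\<lambda>(J, k). pressure n h0 h1 J k)"
proof -
  interpret J: prob_space JM
    by (rule prob_space_JM)
  interpret K: prob_space "poisson_prod n l"
    by (rule prob_space_poisson_prod)
  interpret pair_sigma_finite JM "poisson_prod n l" ..
  define K where "K = (\<integral>k. (2::real) ^ (\<Sum>i<n. k i) \<partial>poisson_prod n l)"
  have integrable_K: "integrable (poisson_prod n l) (\<lambda>k. (2::real) ^ (\<Sum>i<n. k i))"
    by (intro integrable_poisson_prod l exp_growth_two_pow[of _ 1]) simp
  have inner_bound: "\<bar>\<integral>k. \<bar>pressure n h0 h1 J k\<bar> \<partial>poisson_prod n l\<bar> \<le> \<bar>pressure_envelope n h0 h1 J * K\<bar>" for J
  proof -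
    have "(\<integral>k. \<bar>pressure n h0 h1 J k\<bar> \<partial>poisson_prod n l)
        \<le> (\<integral>k. pressure_envelope n h0 h1 J * 2 ^ (\<Sum>i<n. k i) \<partial>poisson_prod n l)"
      using abs_pressure_le[OF n_pos h0_nonneg h1_nonneg]
      by (intro integral_mono integrable_mult_right integrable_K integrable_abs
          integrable_poisson_prod[OF l] exp_growth_pressure n_pos h0_nonneg h1_nonneg) auto
    then show ?thesis
      by (simp add: K_def)
  qed
  have "(\<lambda>(J, k). \<bar>pressure n h0 h1 J k\<bar>) \<in> borel_measurable (JM \<Otimes>\<^sub>M poisson_prod n l)"
    using measurable_compose[OF measurable_pressure_pair borel_measurable_abs] by (simp add: case_prod_beta')
  then have "(\<lambda>J. \<integral>k. \<bar>pressure n h0 h1 J k\<bar> \<partial>poisson_prod n l) \<in> borel_measurable JM"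
    by (rule K.borel_measurable_lebesgue_integral)
  then show ?thesis
    using inner_bound
    by (intro Fubini_integrable measurable_pressure_pair AE_I2 integrable_poisson_prod l
        Bochner_Integration.integrable_bound[OF integrable_mult_left[OF integrable_pressure_envelope]])
      (auto intro: exp_growth_pressure[OF n_pos h0_nonneg h1_nonneg])
qed

definition avg_pressure :: "(nat \<Rightarrow> nat) \<Rightarrow> real" where
  "avg_pressure k = (\<integral>J. pressure n h0 h1 J k \<partial>JM)"

lemma pavg_eq_poisson_expect:
  assumes "0 < \<alpha>"
  shows "pavg JM n \<theta> h0 h1 \<alpha> = poisson_expect n avg_pressure (\<alpha> * real n powr (\<theta> - 1))"
proof -
  interpret J: prob_space JM
    by (rule prob_space_JM)
  have l: "0 < \<alpha> * real n powr (\<theta> - 1)"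
    using assms n_pos by simp
  interpret K: prob_space "poisson_prod n (\<alpha> * real n powr (\<theta> - 1))"
    by (rule prob_space_poisson_prod)
  interpret pair_sigma_finite JM "poisson_prod n (\<alpha> * real n powr (\<theta> - 1))" ..
  show ?thesis
    unfolding pavg_def Phat_eq_poisson_expect poisson_expect_def avg_pressure_def
    using integral_fst[OF integrable_pressure_pair[OF l]] integral_snd[OF integrable_pressure_pair[OF l]]
    by simp
qed

lemma exp_growth_avg_pressure: "exp_growth n avg_pressure"
proof (rule exp_growth_two_pow)
  interpret prob_space JM
    by (rule prob_space_JM)
  fix k :: "nat \<Rightarrow> nat"
  have "\<bar>avg_pressure k\<bar> \<le> (\<integral>J. \<bar>pressure n h0 h1 J k\<bar> \<partial>JM)"
    unfolding avg_pressure_def using integral_norm_bound[of JM "\<lambda>J. pressure n h0 h1 J k"] by simp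
  also have "\<dots> \<le> (\<integral>J. pressure_envelope n h0 h1 J * 2 ^ (\<Sum>i<n. k i) \<partial>JM)"
    using abs_pressure_le[OF n_pos h0_nonneg h1_nonneg]
    by (intro integral_mono integrable_abs integrable_pressure integrable_mult_left
        integrable_pressure_envelope) auto
  finally show "\<bar>avg_pressure k\<bar> \<le> (\<integral>J. pressure_envelope n h0 h1 J \<partial>JM) * 2 ^ (\<Sum>i<n. k i)"
    by simp
qed

lemma fwd_diff_avg_pressure:
  "fwd_diff n avg_pressure = (\<lambda>k. \<integral>J. fwd_diff n (pressure n h0 h1 J) k \<partial>JM)"
  unfolding avg_pressure_def by (rule ext, rule integral_fwd_diff(2)[OF integrable_pressure])

lemma abs_fwd_diff_avg_pressure_le: "\<bar>fwd_diff n avg_pressure k\<bar> \<le> h1"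
  unfolding fwd_diff_avg_pressure
  by (intro prob_space.abs_integral_le_const prob_space_JM integral_fwd_diff(1) integrable_pressure
      abs_fwd_diff_pressure_le n_pos h1_nonneg)

lemma fwd_diff_fwd_diff_avg_pressure_nonneg:
  assumes "AE J in JM. nonneg_correlations n h0 h1 J"
  shows "0 \<le> fwd_diff n (fwd_diff n avg_pressure) k"
proof -
  have "fwd_diff n (fwd_diff n avg_pressure) k = (\<integral>J. fwd_diff n (fwd_diff n (pressure n h0 h1 J)) k \<partial>JM)"
    unfolding fwd_diff_avg_pressure by (intro integral_fwd_diff(2) integral_fwd_diff(1) integrable_pressure)
  also have "\<dots> \<ge> 0"
    using assms by (intro integral_nonneg_AE) (auto elim: AE_mp intro: fwd_diff_fwd_diff_pressure_nonneg)
  finally show ?thesis .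
qed

lemma measurable_Phat: "(\<lambda>J. Phat n \<theta> h0 h1 J \<alpha>) \<in> borel_measurable JM"
proof -
  interpret prob_space "poisson_prod n (\<alpha> * real n powr (\<theta> - 1))"
    by (rule prob_space_poisson_prod)
  show ?thesis
    unfolding Phat_eq_poisson_expect poisson_expect_def
    by (rule borel_measurable_lebesgue_integral) (rule measurable_pressure_pair)
qed

lemma nn_integral_Phat_diff_sq_le:
  assumes "0 < \<alpha>"
  shows "(\<integral>\<^sup>+J. ennreal ((Phat n \<theta> h0 h1 J \<alpha> - p)\<^sup>2) \<partial>JM)
       \<le> (\<integral>\<^sup>+J. \<integral>\<^sup>+\<tau>. ennreal ((pressure n h0 h1 J \<tau> - p)\<^sup>2) \<partial>tau_law n \<theta> \<alpha> \<partial>JM)"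
proof (rule nn_integral_mono)
  fix J
  define l where "l = \<alpha> * real n powr (\<theta> - 1)"
  have l: "0 < l"
    using assms n_pos by (simp add: l_def)
  interpret prob_space "poisson_prod n l"
    by (rule prob_space_poisson_prod)
  have "tau_law n \<theta> \<alpha> = poisson_prod n l"
    by (simp add: tau_law_def poisson_prod_def l_def)
  then show "ennreal ((Phat n \<theta> h0 h1 J \<alpha> - p)\<^sup>2)
      \<le> (\<integral>\<^sup>+\<tau>. ennreal ((pressure n h0 h1 J \<tau> - p)\<^sup>2) \<partial>tau_law n \<theta> \<alpha>)"
    unfolding Phat_eq_poisson_expect poisson_expect_def l_def[symmetric]
    by (simp only:) (intro sq_expectation_le_nn_integral integrable_poisson_prod[OF l]
        exp_growth_pressure[OF n_pos h0_nonneg h1_nonneg]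
        exp_growth_two_pow_sq[OF abs_pressure_le[OF n_pos h0_nonneg h1_nonneg]])
qed

lemma has_real_derivative_Phat:
  assumes "0 < \<alpha>"
  shows "(Phat n \<theta> h0 h1 J has_real_derivative real n powr (\<theta> - 1)
           * poisson_expect n (fwd_diff n (pressure n h0 h1 J)) (\<alpha> * real n powr (\<theta> - 1))) (at \<alpha>)"
  unfolding Phat_eq_poisson_expect[abs_def] using assms n_pos
  by (intro has_field_derivative_poisson_expect_scaled exp_growth_pressure h0_nonneg h1_nonneg) auto

lemma has_real_derivative_pavg:
  assumes "0 < \<alpha>"
  shows "(pavg JM n \<theta> h0 h1 has_real_derivative real n powr (\<theta> - 1)
           * poisson_expect n (fwd_diff n avg_pressure) (\<alpha> * real n powr (\<theta> - 1))) (at \<alpha>)"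
proof -
  have "((\<lambda>\<alpha>. poisson_expect n avg_pressure (\<alpha> * real n powr (\<theta> - 1))) has_real_derivative real n powr (\<theta> - 1)
      * poisson_expect n (fwd_diff n avg_pressure) (\<alpha> * real n powr (\<theta> - 1))) (at \<alpha>)"
    using assms n_pos by (intro has_field_derivative_poisson_expect_scaled exp_growth_avg_pressure) auto
  then show ?thesis
    by (rule has_field_derivative_transform_within_open[of _ _ _ "{0<..}"])
      (use assms in \<open>auto simp: pavg_eq_poisson_expect\<close>)
qed

lemma set_nn_integral_deriv_Phat_diff_sq_le:
  assumes corr: "AE J in JM. nonneg_correlations n h0 h1 J"
    and conc: "\<And>\<alpha>. 0 < \<alpha> \<Longrightarrow> \<alpha> < 1 \<Longrightarrow>
      (\<integral>\<^sup>+J. \<integral>\<^sup>+\<tau>. ennreal ((pressure n h0 h1 J \<tau> - pavg JM n \<theta> h0 h1 \<alpha>)\<^sup>2) \<partial>tau_law n \<theta> \<alpha> \<partial>JM) \<le> ennreal \<epsilon>"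
    and \<epsilon>: "0 \<le> \<epsilon>" and d: "0 < d" and window: "0 < a - d" "a \<le> b" "b + d < 1"
  shows "(\<integral>\<^sup>+\<alpha>\<in>{a..b}. (\<integral>\<^sup>+J. ennreal ((deriv (Phat n \<theta> h0 h1 J) \<alpha> - deriv (pavg JM n \<theta> h0 h1) \<alpha>)\<^sup>2) \<partial>JM) \<partial>lborel)
       \<le> ennreal (16 * \<epsilon> * (b - a) / d\<^sup>2 + 16 * d * (real n powr (\<theta> - 1) * h1)\<^sup>2)"
proof -
  interpret prob_space JM
    by (rule prob_space_JM)
  define c where "c = real n powr (\<theta> - 1)"
  have c: "0 < c"
    using n_pos by (simp add: c_def)
  have window_pos: "{a - d..b + d} \<subseteq> {0<..}"
    using window by auto
  show ?thesis
    unfolding c_def[symmetric]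
  proof (rule set_nn_integral_deriv_diff_sq_le[OF d window(2) \<epsilon>])
    show "(Phat n \<theta> h0 h1 J has_real_derivative
        c * poisson_expect n (fwd_diff n (pressure n h0 h1 J)) (x * c)) (at x)"
      if "x \<in> {a - d..b + d}" for J x
      using that window_pos unfolding c_def by (intro has_real_derivative_Phat) auto
    show "(pavg JM n \<theta> h0 h1 has_real_derivative c * poisson_expect n (fwd_diff n avg_pressure) (x * c)) (at x)"
      if "x \<in> {a - d..b + d}" for x
      using that window_pos unfolding c_def by (intro has_real_derivative_pavg) auto
    show "AE J in JM. mono_on {a - d..b + d} (\<lambda>x. c * poisson_expect n (fwd_diff n (pressure n h0 h1 J)) (x * c))"
      using corr
      by eventually_elim (intro mono_on_subset[OF mono_on_poisson_expect_fwd_diff window_pos]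
          exp_growth_pressure n_pos h0_nonneg h1_nonneg c fwd_diff_fwd_diff_pressure_nonneg)
    show "mono_on {a - d..b + d} (\<lambda>x. c * poisson_expect n (fwd_diff n avg_pressure) (x * c))"
      using corr by (intro mono_on_subset[OF mono_on_poisson_expect_fwd_diff window_pos]
          exp_growth_avg_pressure c fwd_diff_fwd_diff_avg_pressure_nonneg)
    show "\<bar>c * poisson_expect n (fwd_diff n avg_pressure) (x * c)\<bar> \<le> c * h1" if "x \<in> {a - d..b + d}" for x
      using that window_pos c
      by (auto simp: abs_mult intro!: mult_left_mono poisson_expect_abs_le abs_fwd_diff_avg_pressure_le)
    show "(\<lambda>J. Phat n \<theta> h0 h1 J x) \<in> borel_measurable JM" for x
      by (rule measurable_Phat)
    show "(\<integral>\<^sup>+J. ennreal ((Phat n \<theta> h0 h1 J x - pavg JM n \<theta> h0 h1 x)\<^sup>2) \<partial>JM) \<le> ennreal \<epsilon>"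
      if "x \<in> {a - d..b + d}" for x
      using that window by (intro order.trans[OF nn_integral_Phat_diff_sq_le conc]) auto
  qed
qed

end

lemma random_couplings_square_integrable:
  assumes M: "\<And>X. prob_space (M X)" and sets_M: "\<And>X. sets (M X) = sets borel"
    and M_sq: "\<And>X. integrable (M X) (\<lambda>x. x ^ 2)"
    and "1 \<le> n" and "0 \<le> h0" and "0 \<le> h1"
  shows "random_couplings M n h0 h1"
proof (rule random_couplings.intro[OF M sets_M])
  fix X
  interpret prob_space "M X"
    by (rule M)
  show "integrable (M X) (\<lambda>x. x)"
    by (rule square_integrable_imp_integrable[OF _ M_sq]) (subst measurable_cong_sets[OF sets_M refl], simp)
qed (rule assms)+

lemma window_error_bound:
  fixes \<theta> C h a b :: real and n :: nat
  assumes n: "1 \<le> n" and C: "0 \<le> C" and ab: "a \<le> b" "b - a \<le> 1"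
  defines "d \<equiv> 2 * real n powr ((1 - 2 * \<theta>) / 3)"
  shows "16 * (C / n) * (b - a) / d\<^sup>2 + 16 * d * (real n powr (\<theta> - 1) * h)\<^sup>2
       \<le> (5 * C + 40 * h\<^sup>2) / real n powr ((5 - 4 * \<theta>) / 3)"
proof -
  define r e where "r = (5 - 4 * \<theta>) / 3" and "e = (1 - 2 * \<theta>) / 3"
  have n_pos: "0 < real n"
    using n by simp
  have "real n * d\<^sup>2 = 4 * (real n powr 1 * real n powr e * real n powr e)"
    unfolding d_def e_def[symmetric] using n_pos by (simp add: power2_eq_square)
  also have "real n powr 1 * real n powr e * real n powr e = real n powr (1 + e + e)"
    by (simp only: powr_add)
  also have "1 + e + e = r"
    by (simp add: r_def e_def field_simps)
  finally have nd: "real n * d\<^sup>2 = 4 * real n powr r" .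
  have "d * (real n powr (\<theta> - 1) * h)\<^sup>2
      = 2 * h\<^sup>2 * (real n powr e * real n powr (\<theta> - 1) * real n powr (\<theta> - 1))"
    unfolding d_def e_def[symmetric] by (simp add: power2_eq_square algebra_simps)
  also have "real n powr e * real n powr (\<theta> - 1) * real n powr (\<theta> - 1)
      = real n powr (e + (\<theta> - 1) + (\<theta> - 1))"
    by (simp only: powr_add)
  also have "e + (\<theta> - 1) + (\<theta> - 1) = - r"
    by (simp add: r_def e_def field_simps)
  finally have dh: "d * (real n powr (\<theta> - 1) * h)\<^sup>2 = 2 * h\<^sup>2 / real n powr r"
    by (simp add: powr_minus divide_inverse)
  have "16 * (C / n) * (b - a) / d\<^sup>2 + 16 * d * (real n powr (\<theta> - 1) * h)\<^sup>2
      = (4 * (C * (b - a)) + 32 * h\<^sup>2) / real n powr r"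
    using nd dh n_pos by (simp add: field_simps)
  also have "\<dots> \<le> (5 * C + 40 * h\<^sup>2) / real n powr r"
  proof (rule divide_right_mono)
    show "4 * (C * (b - a)) + 32 * h\<^sup>2 \<le> 5 * C + 40 * h\<^sup>2"
      using mult_left_mono[OF ab(2) C] C zero_le_power2[of h] by linarith
  qed simp
  finally show ?thesis
    unfolding r_def .
qed

theorem lemma3p4:
  fixes \<theta> h0 h1 a b C C_P :: real
    and \<mu> :: "nat \<Rightarrow> nat set \<Rightarrow> real measure"
    and JM :: "nat \<Rightarrow> (nat set \<Rightarrow> real) measure"
  assumes theta: "1/2 < \<theta>" "\<theta> < 1"
    and h0: "0 < h0" "h0 < 1"
    and h1: "0 < h1" "h1 \<le> 1"
    and ab: "0 < a" "a \<le> b" "b < 1"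
    and JM_def: "\<And>n. JM n = PiM (Pow {..<n}) (\<mu> n)"
    and mu_prob: "\<And>n X. prob_space (\<mu> n X)"
    and mu_borel: "\<And>n X. sets (\<mu> n X) = sets borel"
    and J_nonneg: "\<And>n X. AE x in \<mu> n X. 0 \<le> x"
    and J_sq: "\<And>n X. integrable (\<mu> n X) (\<lambda>x. x ^ 2)"
    and var_bound: "\<And>n. (\<Sum>X\<in>Pow {..<n}.
            \<integral>x. (x - (\<integral>y. y \<partial>\<mu> n X)) ^ 2 \<partial>\<mu> n X) \<le> C * real n"
    and corr: "\<And>n. AE J in JM n. \<forall>\<tau>. \<forall>i<n. \<forall>j<n.
            gibbs n h0 h1 J \<tau> (\<lambda>\<sigma>. \<sigma> i * \<sigma> j)
            - gibbs n h0 h1 J \<tau> (\<lambda>\<sigma>. \<sigma> i) * gibbs n h0 h1 J \<tau> (\<lambda>\<sigma>. \<sigma> j) \<ge> 0"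
    and CP_pos: "0 < C_P"
    and conc: "\<And>n h0' h1' \<alpha>. n \<ge> 1 \<Longrightarrow> 0 < h0' \<Longrightarrow> h0' < 1 \<Longrightarrow> 0 < h1' \<Longrightarrow> h1' \<le> 1
            \<Longrightarrow> 0 < \<alpha> \<Longrightarrow> \<alpha> < 1 \<Longrightarrow>
            (\<integral>\<^sup>+J. \<integral>\<^sup>+\<tau>. ennreal ((pressure n h0' h1' J \<tau> - pavg (JM n) n \<theta> h0' h1' \<alpha>) ^ 2)
               \<partial>tau_law n \<theta> \<alpha> \<partial>JM n) \<le> ennreal (C_P / real n)"
  shows "\<forall>\<^sub>F n in sequentially.
     (\<integral>\<^sup>+\<alpha>\<in>{a..b}. (\<integral>\<^sup>+J. ennreal ((deriv (Phat n \<theta> h0 h1 J) \<alpha>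
                                    - deriv (pavg (JM n) n \<theta> h0 h1) \<alpha>) ^ 2) \<partial>JM n) \<partial>lborel)
     \<le> ennreal ((5 * C_P + 40 * h1 ^ 2) / real n powr ((5 - 4 * \<theta>) / 3))"
proof -
  define d where "d n = 2 * real n powr ((1 - 2 * \<theta>) / 3)" for n :: nat
  have "(d \<longlongrightarrow> 0) sequentially"
    unfolding d_def using theta
    by (intro tendsto_mult_right_zero tendsto_neg_powr filterlim_real_sequentially) auto
  then have "\<forall>\<^sub>F n in sequentially. d n < min a (1 - b)"
    using ab by (intro order_tendstoD) auto
  then show ?thesis
    using eventually_ge_at_top[of 1]
  proof eventually_elim
    case (elim n)
    interpret random_couplings "\<mu> n" n h0 h1
      using elim h0 h1 by (intro random_couplings_square_integrable mu_prob mu_borel J_sq) auto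
    have "(\<integral>\<^sup>+\<alpha>\<in>{a..b}. (\<integral>\<^sup>+J. ennreal ((deriv (Phat n \<theta> h0 h1 J) \<alpha>
                 - deriv (pavg (JM n) n \<theta> h0 h1) \<alpha>) ^ 2) \<partial>JM n) \<partial>lborel)
        \<le> ennreal (16 * (C_P / n) * (b - a) / (d n)\<^sup>2 + 16 * d n * (real n powr (\<theta> - 1) * h1)\<^sup>2)"
      using elim ab CP_pos corr[of n] conc[of n h0 h1] h0 h1 unfolding JM_def
      by (intro set_nn_integral_deriv_Phat_diff_sq_le) (auto simp: d_def nonneg_correlations_def)
    also have "\<dots> \<le> ennreal ((5 * C_P + 40 * h1 ^ 2) / real n powr ((5 - 4 * \<theta>) / 3))"
      using elim ab CP_pos unfolding d_def by (intro ennreal_leI window_error_bound) auto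
    finally show ?case .
  qed
qed

end
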